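(* Let $I$ be an index set of non-measurable cardinality and let $H$ be the group $\mathbb Z^{(I)}$ with the topology of pointwise convergence on $\mathbb Z^I$. Then the map $\theta:\mathbb Z^I\otimes_{\mathcal Q}\mathbb T\to\widehat H$ determined by $\theta(\bar x\otimes t)[\bar g]=t\cdot\langle\bar g,\bar x\rangle$ ($\bar x\in\mathbb Z^I$, $t\in\mathbb T$, $\bar g\in H$) is a well-defined injective group homomorphism into $\widehat H$; thus $\mathbb Z^I\otimes_{\mathcal Q}\mathbb T$ is canonically embedded in $\widehat H$.
   Context: $\mathbb Z^{(I)}$ is the group of finitely supported functions $I\to\mathbb Z$, paired with $\mathbb Z^I$ by $\langle\bar g,\bar x\rangle=\sum_{i\in I}\bar g(i)\bar x(i)$; $H$ carries the weakest topology making all maps $\bar g\mapsto\langle\bar g,\bar x\rangle\in\mathbb Z$ ($\mathbb Z$ discrete) continuous. $\mathbb Z^I$ has the product topology; $\mathbb T=\mathbb R/\mathbb Z$; $\widehat H$ is the group of continuous homomorphisms $H\to\mathbb T$. A subset $A$ of a topological abelian group $L$ is quasi-convex if for every $g\notin A$ there is a continuous character $\chi$ with $|\chi(a)|\le1/4$ on $A$ and $|\chi(g)|>1/4$; $\mathcal Q$ is the class of Hausdorff abelian groups with a basis at $0$ of quasi-convex sets. A continuous bihomomorphism is separately a continuous homomorphism in each variable and continuous at $(0,0)$. $\mathbb Z^I\otimes_{\mathcal Q}\mathbb T$ is the group in $\mathcal Q$ with a continuous bihomomorphism $(\bar x,t)\mapsto\bar x\otimes t$ from $\mathbb Z^I\times\mathbb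 T$ through which every continuous bihomomorphism into a group of $\mathcal Q$ factors via a unique continuous homomorphism. *)

theory Defs
  imports "HOL-Analysis.Analysis" "HOL-Algebra.Group"
begin

definition top_ab_group :: "('a, 'b) monoid_scheme \<Rightarrow> 'a topology \<Rightarrow> bool" where
  "top_ab_group G \<tau> \<longleftrightarrow> comm_group G \<and> topspace \<tau> = carrier G \<and>
     continuous_map (prod_topology \<tau> \<tau>) \<tau> (\<lambda>p. fst p \<otimes>\<^bsub>G\<^esub> snd p) \<and>
     continuous_map \<tau> \<tau> (\<lambda>x. inv\<^bsub>G\<^esub> x)"

section \<open>The circle group T = R/Z, represented by [0,1) with addition mod 1\<close>

definition T_grp :: "real monoid" where
  "T_grp = \<lparr>carrier = {0..<1}, mult = (\<lambda>x y. frac (x + y)), one = 0\<rparr>"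

text \<open>Quotient topology of R/Z: U is open iff its preimage under frac is open in R.\<close>
definition T_top :: "real topology" where
  "T_top = topology (\<lambda>U. U \<subseteq> {0..<1} \<and> open {x. frac x \<in> U})"

definition tnorm :: "real \<Rightarrow> real" where
  "tnorm t = \<bar>t - of_int (round t)\<bar>"

definition tmul :: "real \<Rightarrow> int \<Rightarrow> real" where
  "tmul t k = frac (of_int k * t)"

definition cont_chars :: "('a, 'b) monoid_scheme \<Rightarrow> 'a topology \<Rightarrow> ('a \<Rightarrow> real) set" where
  "cont_chars G \<tau> = {ch. ch \<in> hom G T_grp \<and> continuous_map \<tau> T_top ch}"

definition quasi_convex :: "('a, 'b) monoid_scheme \<Rightarrow> 'a topology \<Rightarrow> 'a set \<Rightarrow> bool" where
  "quasi_convex G \<tau> A \<longleftrightarrow> A \<subseteq> carrier G \<and>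
     (\<forall>g \<in> carrier G - A. \<exists>ch \<in> cont_chars G \<tau>.
        (\<forall>a\<in>A. tnorm (ch a) \<le> 1/4) \<and> tnorm (ch g) > 1/4)"

definition in_Q :: "('a, 'b) monoid_scheme \<Rightarrow> 'a topology \<Rightarrow> bool" where
  "in_Q G \<tau> \<longleftrightarrow> top_ab_group G \<tau> \<and> Hausdorff_space \<tau> \<and>
     (\<forall>U. openin \<tau> U \<and> \<one>\<^bsub>G\<^esub> \<in> U \<longrightarrow>
        (\<exists>V. quasi_convex G \<tau> V \<and> V \<subseteq> U \<and>
             (\<exists>W. openin \<tau> W \<and> \<one>\<^bsub>G\<^esub> \<in> W \<and> W \<subseteq> V)))"

definition cont_bihom ::
  "('a, 'x) monoid_scheme \<Rightarrow> 'a topology \<Rightarrow> ('b, 'y) monoid_scheme \<Rightarrow> 'b topology \<Rightarrow>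
   ('c, 'z) monoid_scheme \<Rightarrow> 'c topology \<Rightarrow> ('a \<Rightarrow> 'b \<Rightarrow> 'c) \<Rightarrow> bool" where
  "cont_bihom G \<tau>G K \<tau>K M \<tau>M \<beta> \<longleftrightarrow>
     (\<forall>x\<in>carrier G. \<beta> x \<in> hom K M \<and> continuous_map \<tau>K \<tau>M (\<beta> x)) \<and>
     (\<forall>y\<in>carrier K. (\<lambda>x. \<beta> x y) \<in> hom G M \<and> continuous_map \<tau>G \<tau>M (\<lambda>x. \<beta> x y)) \<and>
     (\<forall>U. openin \<tau>M U \<and> \<one>\<^bsub>M\<^esub> \<in> U \<longrightarrow>
        (\<exists>V W. openin \<tau>G V \<and> \<one>\<^bsub>G\<^esub> \<in> V \<and> openin \<tau>K W \<and> \<one>\<^bsub>K\<^esub> \<in> W \<and>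
               (\<forall>x\<in>V. \<forall>y\<in>W. \<beta> x y \<in> U)))"

text \<open>(L, \<tau>L, \<beta>) is a Q-tensor product of G and K: L is in Q, \<beta> is a continuous
  bihomomorphism, and every continuous bihomomorphism into a group of Q (carried by
  the universe type 'm) factors through \<beta> via a unique continuous homomorphism.\<close>
definition is_Q_tensor ::
  "('a, 'x) monoid_scheme \<Rightarrow> 'a topology \<Rightarrow> ('b, 'y) monoid_scheme \<Rightarrow> 'b topology \<Rightarrow>
   ('l, 'z) monoid_scheme \<Rightarrow> 'l topology \<Rightarrow> ('a \<Rightarrow> 'b \<Rightarrow> 'l) \<Rightarrow> 'm itself \<Rightarrow> bool" where
  "is_Q_tensor G \<tau>G K \<tau>K L \<tau>L \<beta> (_::'m itself) \<longleftrightarrow>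
     in_Q L \<tau>L \<and> cont_bihom G \<tau>G K \<tau>K L \<tau>L \<beta> \<and>
     (\<forall>(M::'m monoid) \<tau>M \<gamma>. in_Q M \<tau>M \<and> cont_bihom G \<tau>G K \<tau>K M \<tau>M \<gamma> \<longrightarrow>
        (\<exists>\<phi>. \<phi> \<in> hom L M \<and> continuous_map \<tau>L \<tau>M \<phi> \<and>
             (\<forall>x\<in>carrier G. \<forall>y\<in>carrier K. \<phi> (\<beta> x y) = \<gamma> x y) \<and>
             (\<forall>\<psi>. \<psi> \<in> hom L M \<and> continuous_map \<tau>L \<tau>M \<psi> \<and>
                   (\<forall>x\<in>carrier G. \<forall>y\<in>carrier K. \<psi> (\<beta> x y) = \<gamma> x y) \<longrightarrow>
                   (\<forall>z\<in>carrier L. \<psi> z = \<phi> z))))"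

section \<open>Z^I, H = Z^(I), and the dual of H (index set I = UNIV :: 'i set)\<close>

definition ZI_grp :: "('i \<Rightarrow> int) monoid" where
  "ZI_grp = \<lparr>carrier = UNIV, mult = (\<lambda>x y. (\<lambda>i. x i + y i)), one = (\<lambda>i. 0)\<rparr>"

definition ZI_top :: "('i \<Rightarrow> int) topology" where
  "ZI_top = product_topology (\<lambda>i. discrete_topology (UNIV::int set)) UNIV"

definition pairing :: "('i \<Rightarrow> int) \<Rightarrow> ('i \<Rightarrow> int) \<Rightarrow> int" where
  "pairing g x = (\<Sum>i\<in>{i. g i \<noteq> 0}. g i * x i)"

definition H_grp :: "('i \<Rightarrow> int) monoid" where
  "H_grp = \<lparr>carrier = {g. finite {i. g i \<noteq> 0}}, mult = (\<lambda>x y. (\<lambda>i. x i + y i)),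
            one = (\<lambda>i. 0)\<rparr>"

text \<open>Weakest topology on H making every g \<mapsto> pairing g x (x in Z^I) continuous into
  discrete Z: generated by the sets {g \<in> H. pairing g x = k}.\<close>
definition H_top :: "('i \<Rightarrow> int) topology" where
  "H_top = topology_generated_by
     {{g \<in> carrier H_grp. pairing g x = k} | x k. True}"

definition Hhat_grp :: "(('i \<Rightarrow> int) \<Rightarrow> real) monoid" where
  "Hhat_grp = \<lparr>carrier = cont_chars H_grp H_top \<inter> extensional (carrier H_grp),
     mult = (\<lambda>ch \<psi>. restrict (\<lambda>g. frac (ch g + \<psi> g)) (carrier H_grp)),
     one = restrict (\<lambda>g. 0) (carrier H_grp)\<rparr>"

text \<open>I has measurable cardinality iff there is a free (non-principal) countably
  complete ultrafilter on I.\<close>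
definition ulam_measurable :: "'i set \<Rightarrow> bool" where
  "ulam_measurable I \<longleftrightarrow> (\<exists>U :: 'i set set.
     (\<forall>A\<in>U. A \<subseteq> I) \<and> I \<in> U \<and> {} \<notin> U \<and>
     (\<forall>A B. A \<in> U \<and> A \<subseteq> B \<and> B \<subseteq> I \<longrightarrow> B \<in> U) \<and>
     (\<forall>A. A \<subseteq> I \<longrightarrow> A \<in> U \<or> I - A \<in> U) \<and>
     (\<forall>x\<in>I. {x} \<notin> U) \<and>
     (\<forall>F :: nat \<Rightarrow> 'i set. (\<forall>n. F n \<in> U) \<longrightarrow> I \<inter> (\<Inter>n. F n) \<in> U))"

end

(* The map theta is the continuous homomorphism that the universal property of the Q-tensor
   product assigns to the continuous bihomomorphism (x, t) |-> (g |-> t <g, x>) into the dual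
   of H, topologised by pointwise convergence; with this topology the dual belongs to Q.

   For injectivity: L belongs to Q, so its continuous characters separate points, and it
   suffices that every continuous character chi of L is evaluation at some g in H after theta.
   As chi o beta : Z^I x T -> T is continuous at (0,0), it kills a cylinder
   {x. x i = 0 for i in S} with S finite, and on each unit vector e_i it is a continuous
   endomorphism t |-> c_i t of T; hence chi (beta x t) = t <g, x> for g = c on S and 0 off S.
   Thus chi and (ev g) o theta agree on elementary tensors. Composing both with the embedding
   t |-> theta (beta e t) of T into the dual (e a unit vector), the uniqueness part of the
   universal property makes them equal. *)

theory Submission
  imports Defs
begin

section \<open>The circle group\<close>

declare frac_lt_1 [simp]

lemma frac_in_unit: "frac (x::real) \<in> {0..<1}"
  by simp

lemma frac_of_int_mult_frac: "frac (of_int k * frac x) = frac (of_int k * (x::real))"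
proof -
  have "of_int k * x = of_int k * frac x + of_int (k * \<lfloor>x\<rfloor>)"
    by (simp add: frac_def algebra_simps)
  then show ?thesis by (simp only: frac_add_of_int_right)
qed

lemma frac_eq_frac_iff: "frac (a::real) = frac b \<longleftrightarrow> a - b \<in> \<int>"
proof
  assume "frac a = frac b"
  then show "a - b \<in> \<int>" by (metis frac_diff_eq frac_eq_0_iff)
next
  assume "a - b \<in> \<int>"
  then show "frac a = frac b" by (metis diff_add_cancel frac_add_int_left)
qed

lemma frac_diff_of_int_mult_frac: "frac (a - of_int k * frac b) = frac (a - of_int k * (b::real))"
proof -
  have "a - of_int k * frac b = (a - of_int k * b) + of_int (k * \<lfloor>b\<rfloor>)"
    by (simp add: frac_def algebra_simps)
  then show ?thesis by (simp only: frac_add_of_int_right)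
qed

lemma unit_interval_eq_if_diff_Ints:
  "a \<in> {0..<1} \<Longrightarrow> b \<in> {0..<1} \<Longrightarrow> a - b \<in> \<int> \<Longrightarrow> a = (b::real)"
  by (metis frac_eq_frac_iff frac_eq_id)

lemma tnorm_nonneg: "tnorm x \<ge> 0"
  by (simp add: tnorm_def)

lemma tnorm_le_dist_Ints: "tnorm x \<le> \<bar>x - of_int m\<bar>"
  using round_diff_minimal[of x m] by (simp add: tnorm_def)

lemma tnorm_le_abs: "tnorm x \<le> \<bar>x\<bar>"
  using tnorm_le_dist_Ints[of x 0] by simp

lemma tnorm_le_half: "tnorm x \<le> 1/2"
  using of_int_round_abs_le[of x] by (simp add: tnorm_def abs_minus_commute)

lemma tnorm_add_of_int [simp]: "tnorm (x + of_int k) = tnorm x"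
  using tnorm_le_dist_Ints[of "x + of_int k" "round x + k"] tnorm_le_dist_Ints[of x "round (x + of_int k) - k"]
  by (simp add: tnorm_def algebra_simps)

lemma tnorm_frac [simp]: "tnorm (frac x) = tnorm x"
  using tnorm_add_of_int[of x "- \<lfloor>x\<rfloor>"] by (simp add: frac_def)

lemma tnorm_minus [simp]: "tnorm (- x) = tnorm x"
  using tnorm_le_dist_Ints[of "- x" "- round x"] tnorm_le_dist_Ints[of x "- round (- x)"]
  by (simp add: tnorm_def)

lemma tnorm_minus_commute: "tnorm (x - y) = tnorm (y - x)"
  by (metis minus_diff_eq tnorm_minus)

lemma tnorm_triangle: "tnorm (x + y) \<le> tnorm x + tnorm y"
  using tnorm_le_dist_Ints[of "x + y" "round x + round y"] by (simp add: tnorm_def)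

lemma tnorm_triangle_diff: "tnorm (x - y) \<le> tnorm x + tnorm y"
  using tnorm_triangle[of x "- y"] by simp

lemma tnorm_frac_diff: "tnorm (frac a - frac b) = tnorm (a - b)"
proof -
  have "frac a - frac b = (a - b) + of_int (\<lfloor>b\<rfloor> - \<lfloor>a\<rfloor>)" by (simp add: frac_def)
  then show ?thesis by (simp only: tnorm_add_of_int)
qed

lemma tnorm_eq_abs:
  assumes "\<bar>x\<bar> \<le> 1/2"
  shows "tnorm x = \<bar>x\<bar>"
proof -
  have "\<bar>x\<bar> \<le> \<bar>x - of_int (round x)\<bar>"
  proof (cases "round x = 0")
    case False
    then have "\<bar>real_of_int (round x)\<bar> \<ge> 1" by linarith
    then show ?thesis using assms by linarith
  qed simp
  then show ?thesis using tnorm_le_abs[of x] by (simp add: tnorm_def)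
qed

lemma tnorm_eq_0_iff: "tnorm x = 0 \<longleftrightarrow> x \<in> \<int>"
proof
  assume "tnorm x = 0"
  then have "x = of_int (round x)" by (simp add: tnorm_def)
  then show "x \<in> \<int>" by (metis Ints_of_int)
next
  assume "x \<in> \<int>"
  then show "tnorm x = 0" using tnorm_add_of_int[of 0] by (auto simp: tnorm_def elim: Ints_cases)
qed

lemma tnorm_mult_nat: "tnorm (real n * x) \<le> real n * tnorm x"
proof (induction n)
  case (Suc n)
  have "tnorm (real (Suc n) * x) \<le> tnorm (real n * x) + tnorm x"
    using tnorm_triangle[of "real n * x" x] by (simp add: algebra_simps)
  with Suc show ?case by (simp add: algebra_simps)
qed (simp add: tnorm_def)

lemma tnorm_mult_int: "tnorm (of_int k * x) \<le> \<bar>of_int k\<bar> * tnorm x"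
proof (cases "k \<ge> 0")
  case True
  then show ?thesis using tnorm_mult_nat[of "nat k" x] by simp
next
  case False
  then have "of_int k * x = - (real (nat (- k)) * x)" by simp
  then show ?thesis using tnorm_mult_nat[of "nat (- k)" x] False by simp
qed

lemma tnorm_le_if_multiples_le:
  assumes n: "n \<ge> 1" and small: "\<And>k::nat. 1 \<le> k \<Longrightarrow> k \<le> n \<Longrightarrow> tnorm (real k * x) \<le> 1/4"
  shows "tnorm x \<le> 1 / (4 * real n)"
proof (rule ccontr)
  define s where "s = x - of_int (round x)"
  define r where "r = \<bar>s\<bar>"
  assume "\<not> ?thesis"
  then have big: "r > 1 / (4 * real n)" by (simp add: s_def r_def tnorm_def)
  have r_le: "r \<le> 1/4" using small[of 1] n by (simp add: s_def r_def tnorm_def)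
  have r_pos: "r > 0" using big n by (smt (verit) divide_nonneg_nonneg of_nat_0_le_iff)
  \<comment> \<open>the first multiple k with \<open>k * r > 1/4\<close> has \<open>k \<le> n\<close> and \<open>k * r \<le> 1/2\<close>\<close>
  define k where "k = nat \<lfloor>1 / (4 * r)\<rfloor> + 1"
  have "real k = of_int \<lfloor>1 / (4 * r)\<rfloor> + 1" using r_pos by (simp add: k_def)
  then have k1: "real k - 1 \<le> 1 / (4 * r)" "1 / (4 * r) < real k"
    using of_int_floor_le[of "1 / (4 * r)"] real_of_int_floor_add_one_gt[of "1 / (4 * r)"] by linarith+
  have kr: "real k * r > 1/4" and kr_le: "real k * r \<le> 1/2"
    using k1 r_pos r_le by (simp_all add: field_simps)
  have "(real k - 1) * r \<le> 1/4" using k1(1) r_pos by (simp add: field_simps)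
  moreover have "1/4 < real n * r" using big n by (simp add: field_simps)
  ultimately have "(real k - 1) * r < real n * r" by linarith
  then have "real k - 1 < real n" using r_pos by (simp add: mult_less_cancel_right)
  then have kn: "k \<le> n" by linarith
  have "tnorm (real k * x) = tnorm (real k * s + of_int (int k * round x))"
    by (simp add: s_def algebra_simps)
  also have "\<dots> = real k * r"
    using kr_le by (simp only: tnorm_add_of_int) (simp add: tnorm_eq_abs abs_mult r_def)
  finally show False using small[of k] kn kr unfolding k_def by simp
qed

lemma Ints_if_multiples_tnorm_le:
  assumes "\<And>k::nat. 1 \<le> k \<Longrightarrow> tnorm (real k * x) \<le> 1/4"
  shows "x \<in> \<int>"
proof -
  have "tnorm x \<le> 0"
  proof (rule field_le_epsilon)
    fix e :: real assume "e > 0"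
    obtain n :: nat where n: "1 / e < real n" using reals_Archimedean2 by blast
    moreover have "1 / e > 0" using \<open>e > 0\<close> by simp
    ultimately have "real n > 0" by linarith
    then have "n \<ge> 1" "1 / (4 * real n) \<le> e" using n \<open>e > 0\<close> by (simp_all add: field_simps)
    then show "tnorm x \<le> 0 + e" using tnorm_le_if_multiples_le[of n x] assms by fastforce
  qed
  then show ?thesis using tnorm_nonneg[of x] by (simp add: tnorm_eq_0_iff[symmetric])
qed

lemma istopology_T: "istopology (\<lambda>U::real set. U \<subseteq> {0..<1} \<and> open {x. frac x \<in> U})"
proof -
  have "{x. frac x \<in> \<Union>K} = (\<Union>S\<in>K. {x. frac x \<in> S})" for K :: "real set set" by auto
  then show ?thesis
    unfolding istopology_def by (auto simp: Collect_conj_eq)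
qed

lemma openin_T_top: "openin T_top U \<longleftrightarrow> U \<subseteq> {0..<1} \<and> open {x. frac x \<in> U}"
  unfolding T_top_def using topology_inverse'[OF istopology_T] by simp

lemma topspace_T_top [simp]: "topspace T_top = {0..<1}"
proof -
  have "openin T_top {0..<1}" unfolding openin_T_top by simp
  then show ?thesis unfolding topspace_def openin_T_top by auto
qed

lemma openin_T_iff:
  "openin T_top U \<longleftrightarrow>
     U \<subseteq> {0..<1} \<and> (\<forall>x\<in>U. \<exists>e>0. \<forall>y\<in>{0..<1}. tnorm (y - x) < e \<longrightarrow> y \<in> U)"
proof
  assume "openin T_top U"
  then have U: "U \<subseteq> {0..<1}" and op: "open {x. frac x \<in> U}" by (auto simp: openin_T_top)
  have "\<exists>e>0. \<forall>y\<in>{0..<1}. tnorm (y - x) < e \<longrightarrow> y \<in> U" if x: "x \<in> U" for x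
  proof -
    have "x \<in> {x. frac x \<in> U}" using x U by auto
    then obtain e where e: "e > 0" "ball x e \<subseteq> {x. frac x \<in> U}"
      using op open_contains_ball by blast
    have "y \<in> U" if y: "y \<in> {0..<1}" and close: "tnorm (y - x) < e" for y
    proof -
      define z where "z = y - of_int (round (y - x))"
      have "dist z x < e" using close by (simp add: z_def tnorm_def dist_real_def algebra_simps)
      then have "frac z \<in> U" using e by (auto simp: dist_commute)
      moreover have "z = y + of_int (- round (y - x))" by (simp add: z_def)
      then have "frac z = y" using y by (simp only: frac_add_of_int_right frac_eq_id)
      ultimately show ?thesis by simp
    qed
    then show ?thesis using e by blast
  qed
  with U show "U \<subseteq> {0..<1} \<and> (\<forall>x\<in>U. \<exists>e>0. \<forall>y\<in>{0..<1}. tnorm (y - x) < e \<longrightarrow> y \<in> U)"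
    by blast
next
  assume r: "U \<subseteq> {0..<1} \<and> (\<forall>x\<in>U. \<exists>e>0. \<forall>y\<in>{0..<1}. tnorm (y - x) < e \<longrightarrow> y \<in> U)"
  have "open {x. frac x \<in> U}"
  proof (rule openI)
    fix z assume "z \<in> {x. frac x \<in> U}"
    then obtain e where e: "e > 0" "\<forall>y\<in>{0..<1}. tnorm (y - frac z) < e \<longrightarrow> y \<in> U"
      using r by blast
    have "frac w \<in> U" if "w \<in> ball z e" for w
    proof -
      have "tnorm (frac w - frac z) < e"
        using that tnorm_le_abs[of "w - z"] by (simp add: tnorm_frac_diff dist_real_def abs_minus_commute)
      then show ?thesis using e(2) frac_in_unit[of w] by blast
    qed
    then show "\<exists>e>0. ball z e \<subseteq> {x. frac x \<in> U}" using e by blast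
  qed
  then show "openin T_top U" using r by (simp add: openin_T_top)
qed

definition tball :: "real \<Rightarrow> real \<Rightarrow> real set" where
  "tball x e = {y \<in> {0..<1}. tnorm (y - x) < e}"

lemma openin_tball: "openin T_top (tball x e)"
  unfolding openin_T_iff
proof (intro conjI ballI)
  fix y assume y: "y \<in> tball x e"
  have "z \<in> tball x e" if "z \<in> {0..<1}" "tnorm (z - y) < e - tnorm (y - x)" for z
    using that tnorm_triangle[of "z - y" "y - x"] by (simp add: tball_def)
  moreover have "e - tnorm (y - x) > 0" using y by (simp add: tball_def)
  ultimately show "\<exists>d>0. \<forall>z\<in>{0..<1}. tnorm (z - y) < d \<longrightarrow> z \<in> tball x e" by blast
qed (auto simp: tball_def)

lemma centre_in_tball: "x \<in> {0..<1} \<Longrightarrow> e > 0 \<Longrightarrow> x \<in> tball x e"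
  by (simp add: tball_def tnorm_def)

lemma continuous_map_T_iff:
  "continuous_map X T_top f \<longleftrightarrow> (\<forall>x\<in>topspace X. f x \<in> {0..<1}) \<and>
     (\<forall>x\<in>topspace X. \<forall>e>0. \<exists>V. openin X V \<and> x \<in> V \<and> (\<forall>y\<in>V. tnorm (f y - f x) < e))"
    (is "_ \<longleftrightarrow> ?range \<and> ?eps")
proof
  assume f: "continuous_map X T_top f"
  then have ?range by (auto simp: continuous_map_def)
  moreover have ?eps
  proof (intro ballI allI impI)
    fix x and e :: real assume x: "x \<in> topspace X" and "e > 0"
    then have "x \<in> {y \<in> topspace X. f y \<in> tball (f x) e}"
      using \<open>?range\<close> by (simp add: centre_in_tball)
    moreover have "openin X {y \<in> topspace X. f y \<in> tball (f x) e}"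
      using f openin_tball by (auto simp: continuous_map_def)
    ultimately show "\<exists>V. openin X V \<and> x \<in> V \<and> (\<forall>y\<in>V. tnorm (f y - f x) < e)"
      by (auto simp: tball_def)
  qed
  ultimately show "?range \<and> ?eps" ..
next
  assume a: "?range \<and> ?eps"
  have "openin X {x \<in> topspace X. f x \<in> U}" if U: "openin T_top U" for U
  proof (subst openin_subopen, intro ballI)
    fix x assume x: "x \<in> {x \<in> topspace X. f x \<in> U}"
    then obtain e where e: "e > 0" "\<forall>y\<in>{0..<1}. tnorm (y - f x) < e \<longrightarrow> y \<in> U"
      using U unfolding openin_T_iff by blast
    obtain V where V: "openin X V" "x \<in> V" "\<forall>y\<in>V. tnorm (f y - f x) < e"
      using a x e by blast
    then show "\<exists>T. openin X T \<and> x \<in> T \<and> T \<subseteq> {x \<in> topspace X. f x \<in> U}"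
      using e a openin_subset[OF V(1)] by (intro exI[of _ V]) auto
  qed
  with a show "continuous_map X T_top f" by (auto simp: continuous_map_def)
qed

lemma Hausdorff_T: "Hausdorff_space T_top"
  unfolding Hausdorff_space_def
proof (intro allI impI)
  fix x y assume xy: "x \<in> topspace T_top \<and> y \<in> topspace T_top \<and> x \<noteq> y"
  define d where "d = tnorm (y - x)"
  have "d \<noteq> 0"
    using xy unit_interval_eq_if_diff_Ints[of y x] by (auto simp: d_def tnorm_eq_0_iff)
  then have d: "d > 0" using tnorm_nonneg[of "y - x"] by (simp add: d_def)
  have "disjnt (tball x (d/2)) (tball y (d/2))"
    unfolding disjnt_def
  proof (rule equals0I)
    fix z assume "z \<in> tball x (d/2) \<inter> tball y (d/2)"
    then have "tnorm (z - x) < d/2" "tnorm (y - z) < d/2"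
      by (auto simp: tball_def tnorm_minus_commute[of y])
    moreover have "d \<le> tnorm (z - x) + tnorm (y - z)"
      using tnorm_triangle[of "z - x" "y - z"] by (simp add: d_def)
    ultimately show False by linarith
  qed
  then show "\<exists>U V. openin T_top U \<and> openin T_top V \<and> x \<in> U \<and> y \<in> V \<and> disjnt U V"
    using xy d by (intro exI[of _ "tball x (d/2)"] exI[of _ "tball y (d/2)"])
      (auto simp: openin_tball centre_in_tball)
qed

lemma continuous_map_T_add:
  assumes f: "continuous_map X T_top f" and g: "continuous_map X T_top g"
  shows "continuous_map X T_top (\<lambda>x. frac (f x + g x))"
  unfolding continuous_map_T_iff
proof (intro conjI ballI allI impI frac_in_unit)
  fix x and e :: real assume x: "x \<in> topspace X" and "e > 0"
  then have "e/2 > 0" by simp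
  obtain V where V: "openin X V" "x \<in> V" "\<forall>y\<in>V. tnorm (f y - f x) < e/2"
    using f x \<open>e/2 > 0\<close> unfolding continuous_map_T_iff by meson
  obtain W where W: "openin X W" "x \<in> W" "\<forall>y\<in>W. tnorm (g y - g x) < e/2"
    using g x \<open>e/2 > 0\<close> unfolding continuous_map_T_iff by meson
  have "tnorm (frac (f y + g y) - frac (f x + g x)) < e" if "y \<in> V \<inter> W" for y
  proof -
    have "tnorm (frac (f y + g y) - frac (f x + g x)) = tnorm ((f y - f x) + (g y - g x))"
      by (simp add: tnorm_frac_diff algebra_simps)
    also have "\<dots> \<le> tnorm (f y - f x) + tnorm (g y - g x)" by (rule tnorm_triangle)
    also have "\<dots> < e" using V W that by fastforce
    finally show ?thesis .
  qed
  then show "\<exists>V. openin X V \<and> x \<in> V \<and> (\<forall>y\<in>V. tnorm (frac (f y + g y) - frac (f x + g x)) < e)"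
    using V W by (intro exI[of _ "V \<inter> W"]) auto
qed

lemma continuous_map_T_mult_int:
  assumes f: "continuous_map X T_top f"
  shows "continuous_map X T_top (\<lambda>x. frac (of_int k * f x))"
  unfolding continuous_map_T_iff
proof (intro conjI ballI allI impI frac_in_unit)
  fix x and e :: real assume x: "x \<in> topspace X" and e: "e > 0"
  define e' where "e' = e / (\<bar>of_int k\<bar> + 1)"
  have e': "e' > 0" using e by (simp add: e'_def add_pos_nonneg)
  obtain V where V: "openin X V" "x \<in> V" "\<forall>y\<in>V. tnorm (f y - f x) < e'"
    using f x e' unfolding continuous_map_T_iff by meson
  have "tnorm (frac (of_int k * f y) - frac (of_int k * f x)) < e" if "y \<in> V" for y
  proof -
    have "tnorm (frac (of_int k * f y) - frac (of_int k * f x)) = tnorm (of_int k * (f y - f x))"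
      by (simp add: tnorm_frac_diff algebra_simps)
    also have "\<dots> \<le> \<bar>of_int k\<bar> * tnorm (f y - f x)" by (rule tnorm_mult_int)
    also have "\<dots> \<le> \<bar>of_int k\<bar> * e'" using V that by (intro mult_left_mono) (auto simp: less_imp_le)
    also have "\<dots> < e" using e by (simp add: e'_def field_simps)
    finally show ?thesis .
  qed
  then show "\<exists>V. openin X V \<and> x \<in> V \<and>
      (\<forall>y\<in>V. tnorm (frac (of_int k * f y) - frac (of_int k * f x)) < e)"
    using V by blast
qed

lemma T_grp_simps [simp]:
  "carrier T_grp = {0..<1}" "mult T_grp x y = frac (x + y)" "one T_grp = 0"
  by (simp_all add: T_grp_def)

lemma comm_group_T: "comm_group T_grp"
proof (rule comm_groupI)
  fix x assume "x \<in> carrier T_grp"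
  then show "\<exists>y\<in>carrier T_grp. y \<otimes>\<^bsub>T_grp\<^esub> x = \<one>\<^bsub>T_grp\<^esub>"
    by (intro bexI[of _ "frac (- x)"]) simp_all
qed (auto simp: ac_simps)

lemma group_T: "group T_grp"
  using comm_group_T comm_group_def by blast

lemma T_nat_pow: "x \<in> {0..<1} \<Longrightarrow> x [^]\<^bsub>T_grp\<^esub> (n::nat) = frac (real n * x)"
  by (induction n) (simp_all add: algebra_simps)

lemma hom_T_add:
  "\<phi> \<in> hom G T_grp \<Longrightarrow> x \<in> carrier G \<Longrightarrow> y \<in> carrier G \<Longrightarrow>
     \<phi> (x \<otimes>\<^bsub>G\<^esub> y) = frac (\<phi> x + \<phi> y)"
  by (simp add: hom_mult)

lemma hom_T_range: "\<phi> \<in> hom G T_grp \<Longrightarrow> x \<in> carrier G \<Longrightarrow> \<phi> x \<in> {0..<1}"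
  using hom_in_carrier by fastforce

lemma T_endo_frac_mult:
  "\<phi> \<in> hom T_grp T_grp \<Longrightarrow> x \<in> {0..<1} \<Longrightarrow> \<phi> (frac (real n * x)) = frac (real n * \<phi> x)"
  using hom_nat_pow[of \<phi> T_grp T_grp x n] T_nat_pow[OF hom_T_range[of \<phi> T_grp x]]
  by (simp add: group_T T_nat_pow)

lemma hom_T_sum:
  assumes "\<eta> \<in> hom G T_grp" "\<psi> \<in> hom G T_grp"
  shows "(\<lambda>x. frac (\<eta> x + \<psi> x)) \<in> hom G T_grp"
proof (rule homI)
  fix x y assume "x \<in> carrier G" "y \<in> carrier G"
  then have "frac (\<eta> (x \<otimes>\<^bsub>G\<^esub> y) + \<psi> (x \<otimes>\<^bsub>G\<^esub> y)) = frac ((\<eta> x + \<eta> y) + (\<psi> x + \<psi> y))"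
    using assms by (simp add: hom_T_add)
  also have "\<dots> = frac ((\<eta> x + \<psi> x) + (\<eta> y + \<psi> y))"
    by (rule arg_cong[where f = frac]) simp
  also have "\<dots> = frac (frac (\<eta> x + \<psi> x) + frac (\<eta> y + \<psi> y))"
    by (simp only: frac_add_simps)
  finally show "frac (\<eta> (x \<otimes>\<^bsub>G\<^esub> y) + \<psi> (x \<otimes>\<^bsub>G\<^esub> y)) =
      frac (\<eta> x + \<psi> x) \<otimes>\<^bsub>T_grp\<^esub> frac (\<eta> y + \<psi> y)" by simp
qed simp

lemma hom_T_neg:
  assumes "\<eta> \<in> hom G T_grp"
  shows "(\<lambda>x. frac (- \<eta> x)) \<in> hom G T_grp"
proof (rule homI)
  fix x y assume "x \<in> carrier G" "y \<in> carrier G"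
  then have "frac (- \<eta> (x \<otimes>\<^bsub>G\<^esub> y)) = frac (- \<eta> x + - \<eta> y)"
    using assms by (simp add: hom_T_add frac_neg_frac)
  also have "\<dots> = frac (frac (- \<eta> x) + frac (- \<eta> y))" by (simp only: frac_add_simps)
  finally show "frac (- \<eta> (x \<otimes>\<^bsub>G\<^esub> y)) = frac (- \<eta> x) \<otimes>\<^bsub>T_grp\<^esub> frac (- \<eta> y)" by simp
qed simp

lemma T_mult_int_hom: "(\<lambda>t. frac (of_int k * t)) \<in> hom T_grp T_grp"
  by (rule homI) (simp_all add: frac_of_int_mult_frac distrib_left)

lemma hom_T_eq_0_if_powers_small:
  assumes \<phi>: "\<phi> \<in> hom G T_grp" and G: "group G" and x: "x \<in> carrier G"
    and small: "\<And>k::nat. 1 \<le> k \<Longrightarrow> tnorm (\<phi> (x [^]\<^bsub>G\<^esub> k)) \<le> 1/4"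
  shows "\<phi> x = 0"
proof -
  have "\<phi> (x [^]\<^bsub>G\<^esub> k) = frac (real k * \<phi> x)" for k :: nat
    using hom_nat_pow[OF \<phi> x G group_T] T_nat_pow[OF hom_T_range[OF \<phi> x]] by simp
  then have "\<phi> x \<in> \<int>" using small by (intro Ints_if_multiples_tnorm_le) simp
  then show ?thesis using hom_T_range[OF \<phi> x] unit_interval_eq_if_diff_Ints[of "\<phi> x" 0] by simp
qed

lemma tmul_bounds [simp]: "0 \<le> tmul t k" "tmul t k < 1"
  by (simp_all add: tmul_def)

lemma tmul_add_int: "tmul t (a + b) = frac (tmul t a + tmul t b)"
  by (simp add: tmul_def algebra_simps)

lemma tmul_frac_add: "tmul (frac (s + t)) k = frac (tmul s k + tmul t k)"
  by (simp add: tmul_def frac_of_int_mult_frac algebra_simps)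

lemma tmul_one: "t \<in> {0..<1} \<Longrightarrow> tmul t 1 = t"
  by (simp add: tmul_def)

lemma continuous_map_tmul: "continuous_map T_top T_top (\<lambda>t. tmul t k)"
  unfolding tmul_def by (rule continuous_map_T_mult_int[OF continuous_map_id[unfolded id_def]])

section \<open>Continuous endomorphisms of the circle\<close>

lemma T_endo_small_near_0:
  assumes hom: "\<phi> \<in> hom T_grp T_grp" and cont: "continuous_map T_top T_top \<phi>"
  obtains \<delta> where "\<delta> > 0" "\<And>t. t \<in> {0..<1} \<Longrightarrow> tnorm t \<le> \<delta> \<Longrightarrow> tnorm (\<phi> t) \<le> 1/4"
proof -
  have "\<phi> 0 = 0" using hom_one[OF hom group_T group_T] by simp
  moreover have "\<forall>x\<in>topspace T_top. \<forall>e>0. \<exists>V. openin T_top V \<and> x \<in> V \<and> (\<forall>y\<in>V. tnorm (\<phi> y - \<phi> x) < e)"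
    using cont unfolding continuous_map_T_iff by blast
  ultimately obtain V where V: "openin T_top V" "0 \<in> V" "\<forall>y\<in>V. tnorm (\<phi> y) < 1/4"
    by (metis diff_zero topspace_T_top atLeastLessThan_iff order_refl zero_less_one divide_pos_pos
        zero_less_numeral)
  then obtain e where e: "e > 0" "\<forall>y\<in>{0..<1}. tnorm (y - 0) < e \<longrightarrow> y \<in> V"
    unfolding openin_T_iff by blast
  show ?thesis
  proof
    show "e/2 > 0" using e(1) by simp
    show "tnorm (\<phi> t) \<le> 1/4" if "t \<in> {0..<1}" "tnorm t \<le> e/2" for t
      using that e V(3) by fastforce
  qed
qed

lemma T_endo_lipschitz:
  assumes hom: "\<phi> \<in> hom T_grp T_grp" and cont: "continuous_map T_top T_top \<phi>"
  obtains K where "K \<ge> 0" "\<And>t. t \<in> {0..<1} \<Longrightarrow> tnorm (\<phi> t) \<le> K * tnorm t"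
proof -
  obtain \<delta> where \<delta>: "\<delta> > 0" and small: "\<And>t. t \<in> {0..<1} \<Longrightarrow> tnorm t \<le> \<delta> \<Longrightarrow> tnorm (\<phi> t) \<le> 1/4"
    using T_endo_small_near_0[OF hom cont] by blast
  have "tnorm (\<phi> t) \<le> 1 / (2 * \<delta>) * tnorm t" if t: "t \<in> {0..<1}" for t
  proof -
    define r where "r = tnorm t"
    consider "r = 0" | "0 < r" "r \<le> \<delta>" | "\<delta> < r"
      using tnorm_nonneg[of t] unfolding r_def by linarith
    then show ?thesis
    proof cases
      case 1
      then have "t = 0" using t unit_interval_eq_if_diff_Ints[of t 0] by (simp add: r_def tnorm_eq_0_iff)
      then show ?thesis using hom_one[OF hom group_T group_T] by (simp add: tnorm_def)
    next
      case 2
      \<comment> \<open>\<open>n\<close> is the largest number with \<open>n * r \<le> \<delta>\<close>; the multiples \<open>k * t\<close>, \<open>k \<le> n\<close>, stay where \<open>\<phi>\<close> is small\<close>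
      define n where "n = nat \<lfloor>\<delta> / r\<rfloor>"
      have n_eq: "real n = of_int \<lfloor>\<delta> / r\<rfloor>" using 2 \<delta> by (simp add: n_def)
      have "1 \<le> \<delta> / r" using 2 by simp
      then have n1: "n \<ge> 1" using n_eq by linarith
      have nr: "real n * r \<le> \<delta>"
        using 2 of_int_floor_le[of "\<delta> / r"] by (simp add: n_eq le_divide_eq)
      have nr': "\<delta> < (real n + 1) * r"
        unfolding n_eq by (metis 2(1) pos_divide_less_eq real_of_int_floor_add_one_gt)
      have "tnorm (real k * \<phi> t) \<le> 1/4" if "1 \<le> k" "k \<le> n" for k
      proof -
        have "tnorm (frac (real k * t)) \<le> real k * r"
          using tnorm_mult_nat[of k t] by (simp add: r_def)
        also have "\<dots> \<le> \<delta>" using 2 that nr by (meson mult_right_mono of_nat_le_iff order_trans less_imp_le)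
        finally have "tnorm (\<phi> (frac (real k * t))) \<le> 1/4" by (intro small) simp_all
        then show ?thesis using T_endo_frac_mult[OF hom t] by simp
      qed
      then have "tnorm (\<phi> t) \<le> 1 / (4 * real n)" by (rule tnorm_le_if_multiples_le[OF n1])
      also have "\<dots> \<le> 1 / (2 * (real n + 1))" using n1 by (simp add: field_simps)
      also have "\<dots> \<le> r / (2 * \<delta>)" using nr' 2 \<delta> by (simp add: field_simps)
      finally show ?thesis by (simp add: r_def)
    next
      case 3
      then have "1/2 \<le> 1 / (2 * \<delta>) * r" using \<delta> by (simp add: field_simps)
      then show ?thesis using tnorm_le_half[of "\<phi> t"] by (simp add: r_def)
    qed
  qed
  moreover have "1 / (2 * \<delta>) \<ge> 0" using \<delta> by simp
  ultimately show ?thesis using that by blast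
qed

lemma T_endo_eq_0_if_lipschitz:
  assumes hom: "\<psi> \<in> hom T_grp T_grp"
    and lip: "\<And>t. t \<in> {0..<1} \<Longrightarrow> tnorm (\<psi> t) \<le> L * tnorm t" and "L \<ge> 0"
    and N: "2 \<le> N" "2 * L \<le> real N" and kernel: "\<psi> (1 / real N) = 0"
    and t: "t \<in> {0..<1}"
  shows "\<psi> t = 0"
proof -
  have u: "1 / real N \<in> {0..<1}" using N by simp
  \<comment> \<open>every point is within \<open>1/(2N)\<close> of a multiple of \<open>1/N\<close>, on which \<open>\<psi>\<close> vanishes\<close>
  have small: "tnorm (\<psi> s) \<le> 1/4" if s: "s \<in> {0..<1}" for s
  proof -
    define j where "j = nat (round (s * real N))"
    define w where "w = s - real j / real N"
    have "0 \<le> round (s * real N)" using s by (simp add: round_def)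
    then have j: "real j = of_int (round (s * real N))" by (simp add: j_def)
    have "\<bar>w\<bar> \<le> 1 / (2 * real N)"
      using of_int_round_abs_le[of "s * real N"] N
      by (simp add: w_def j divide_simps abs_if split: if_splits)
    have "s = frac (frac (real j * (1 / real N)) + frac w)"
      using s by (simp add: w_def)
    then have "\<psi> s = frac (\<psi> (frac (real j * (1 / real N))) + \<psi> (frac w))"
      using hom_T_add[OF hom, of "frac (real j * (1 / real N))" "frac w"] by simp
    also have "\<psi> (frac (real j * (1 / real N))) = 0"
      using T_endo_frac_mult[OF hom u, of j] kernel by simp
    finally have "\<psi> s = \<psi> (frac w)"
      using hom_T_range[OF hom, of "frac w"] by simp
    then have "tnorm (\<psi> s) \<le> L * tnorm w"
      using lip[of "frac w"] by simp
    also have "\<dots> \<le> L * (1 / (2 * real N))"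
      using \<open>\<bar>w\<bar> \<le> _\<close> tnorm_le_abs[of w] \<open>L \<ge> 0\<close> by (intro mult_left_mono) simp_all
    also have "\<dots> \<le> 1/4" using N by (simp add: field_simps)
    finally show ?thesis .
  qed
  have "tnorm (real k * \<psi> t) \<le> 1/4" for k
    using small[of "frac (real k * t)"] T_endo_frac_mult[OF hom t, of k] by simp
  then have "\<psi> t \<in> \<int>" by (intro Ints_if_multiples_tnorm_le)
  then show ?thesis using hom_T_range[OF hom] t unit_interval_eq_if_diff_Ints[of "\<psi> t" 0] by simp
qed

lemma T_endo_minus_mult_hom:
  assumes hom: "\<phi> \<in> hom T_grp T_grp"
  shows "(\<lambda>t. frac (\<phi> t - of_int c * t)) \<in> hom T_grp T_grp"
proof (rule homI)
  fix s t :: real assume "s \<in> carrier T_grp" "t \<in> carrier T_grp"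
  then have "frac (\<phi> (frac (s + t)) - of_int c * frac (s + t)) =
      frac (frac (\<phi> s + \<phi> t) - of_int c * frac (s + t))"
    using hom_T_add[OF hom] by simp
  also have "\<dots> = frac (frac (\<phi> s + \<phi> t) - of_int c * (s + t))"
    by (rule frac_diff_of_int_mult_frac)
  also have "\<dots> = frac (\<phi> s + \<phi> t - of_int c * (s + t))"
    using frac_add_simps(1)[of "\<phi> s + \<phi> t" "- (of_int c * (s + t))"] by simp
  also have "\<dots> = frac ((\<phi> s - of_int c * s) + (\<phi> t - of_int c * t))"
    by (rule arg_cong[where f = frac]) (simp add: algebra_simps)
  finally show "frac (\<phi> (s \<otimes>\<^bsub>T_grp\<^esub> t) - of_int c * (s \<otimes>\<^bsub>T_grp\<^esub> t)) =
      frac (\<phi> s - of_int c * s) \<otimes>\<^bsub>T_grp\<^esub> frac (\<phi> t - of_int c * t)" by simp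
qed simp

theorem T_endo_eq_mult:
  assumes hom: "\<phi> \<in> hom T_grp T_grp" and cont: "continuous_map T_top T_top \<phi>"
  obtains c :: int where "\<And>t. t \<in> {0..<1} \<Longrightarrow> \<phi> t = frac (of_int c * t)"
proof -
  obtain K where K: "K \<ge> 0" "\<And>t. t \<in> {0..<1} \<Longrightarrow> tnorm (\<phi> t) \<le> K * tnorm t"
    using T_endo_lipschitz[OF hom cont] by blast
  define N where "N = nat \<lceil>4 * K\<rceil> + 2"
  define u where "u = 1 / real N"
  have N: "2 \<le> N" "4 * K \<le> real N" unfolding N_def by linarith+
  have u: "u \<in> {0..<1}" "tnorm u = u" using N by (simp_all add: u_def tnorm_eq_abs)
  \<comment> \<open>\<open>N * \<phi> u\<close> is an integer as \<open>\<phi>\<close> kills \<open>N * u = 1\<close>; \<open>c/N\<close> is the representative of \<open>\<phi> u\<close>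
     nearest to 0, so \<open>\<bar>c\<bar> \<le> K\<close>\<close>
  have "frac (real N * \<phi> u) = \<phi> (frac (real N * u))"
    using T_endo_frac_mult[OF hom u(1)] by simp
  also have "\<dots> = 0" using N hom_one[OF hom group_T group_T] by (simp add: u_def)
  finally have "real N * (\<phi> u - of_int (round (\<phi> u))) \<in> \<int>"
    by (simp add: right_diff_distrib)
  then obtain c where c: "of_int c = real N * (\<phi> u - of_int (round (\<phi> u)))"
    by (auto elim: Ints_cases)
  have "\<bar>of_int c\<bar> = real N * tnorm (\<phi> u)" by (simp add: c tnorm_def abs_mult)
  also have "\<dots> \<le> real N * (K * u)" using K(2)[OF u(1)] u by (simp add: mult_left_mono)
  finally have c_le: "\<bar>of_int c\<bar> \<le> K" using N by (simp add: u_def)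
  define \<psi> where "\<psi> t = frac (\<phi> t - of_int c * t)" for t
  have "tnorm (\<psi> t) \<le> (2 * K) * tnorm t" if "t \<in> {0..<1}" for t
  proof -
    have "tnorm (\<psi> t) \<le> tnorm (\<phi> t) + tnorm (of_int c * t)"
      unfolding \<psi>_def tnorm_frac by (rule tnorm_triangle_diff)
    also have "\<dots> \<le> K * tnorm t + K * tnorm t"
      using K(2)[OF that] tnorm_mult_int[of c t] c_le tnorm_nonneg[of t]
      by (smt (verit) mult_right_mono)
    finally show ?thesis by simp
  qed
  moreover have "\<psi> u = 0" using N by (simp add: \<psi>_def c u_def field_simps)
  ultimately have \<psi>0: "\<psi> t = 0" if "t \<in> {0..<1}" for t
    using T_endo_eq_0_if_lipschitz[OF T_endo_minus_mult_hom[OF hom, of c], of "2 * K" N t] N K(1) that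
    by (simp add: u_def \<psi>_def)
  have "\<phi> t = frac (of_int c * t)" if t: "t \<in> {0..<1}" for t
  proof -
    have "\<phi> t - of_int c * t \<in> \<int>" using \<psi>0[OF t] by (simp add: \<psi>_def)
    then have "of_int c * t - \<phi> t \<in> \<int>" by (metis Ints_minus minus_diff_eq)
    then have "frac (of_int c * t) = \<phi> t" using hom_T_range[OF hom, of t] t by (simp add: frac_unique_iff)
    then show ?thesis by simp
  qed
  then show ?thesis by (rule that)
qed

section \<open>The class Q and the universal property of the Q-tensor product\<close>

lemma in_Q_D:
  assumes "in_Q G \<tau>"
  shows "comm_group G" "group G" "topspace \<tau> = carrier G" "Hausdorff_space \<tau>"
  using assms unfolding in_Q_def top_ab_group_def comm_group_def by blast+

lemma in_Q_cont_chars_separate: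
  assumes Q: "in_Q G \<tau>" and xy: "x \<in> carrier G" "y \<in> carrier G"
    and eq: "\<And>ch. ch \<in> cont_chars G \<tau> \<Longrightarrow> ch x = ch y"
  shows "x = y"
proof (rule ccontr)
  interpret comm_group G using in_Q_D(1)[OF Q] .
  assume "x \<noteq> y"
  define g where "g = x \<otimes>\<^bsub>G\<^esub> inv\<^bsub>G\<^esub> y"
  have g: "g \<in> carrier G" "g \<noteq> \<one>\<^bsub>G\<^esub>"
    using xy \<open>x \<noteq> y\<close> inv_solve_right'[of "\<one>\<^bsub>G\<^esub>" x y] by (auto simp: g_def)
  obtain U V where UV: "openin \<tau> U" "openin \<tau> V" "\<one>\<^bsub>G\<^esub> \<in> U" "g \<in> V" "disjnt U V"
    using in_Q_D(3,4)[OF Q] g unfolding Hausdorff_space_def by (metis one_closed)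
  obtain V' where "quasi_convex G \<tau> V'" "V' \<subseteq> U"
    using Q UV(1,3) unfolding in_Q_def by blast
  moreover have "g \<notin> U" using UV(4,5) by (auto simp: disjnt_def)
  ultimately obtain ch where ch: "ch \<in> cont_chars G \<tau>" "tnorm (ch g) > 1/4"
    using g(1) unfolding quasi_convex_def by blast
  have hom: "ch \<in> hom G T_grp" using ch(1) by (simp add: cont_chars_def)
  have "ch g = frac (ch x + ch (inv\<^bsub>G\<^esub> y))" using hom_T_add[OF hom] xy by (simp add: g_def)
  also have "\<dots> = ch (y \<otimes>\<^bsub>G\<^esub> inv\<^bsub>G\<^esub> y)"
    using hom_T_add[OF hom, of y "inv\<^bsub>G\<^esub> y"] eq[OF ch(1)] xy by simp
  also have "\<dots> = 0" using xy hom_one[OF hom is_group group_T] by simp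
  finally show False using ch(2) by (simp add: tnorm_def)
qed

lemma cont_chars_compose:
  assumes "ch \<in> cont_chars G \<tau>" "h \<in> hom M G" "continuous_map \<sigma> \<tau> h"
  shows "ch \<circ> h \<in> cont_chars M \<sigma>"
  using assms hom_compose continuous_map_compose by (fastforce simp: cont_chars_def)

lemma top_ab_group_iso:
  assumes G: "top_ab_group G \<tau>" and M: "comm_group M"
    and iso: "group_isomorphisms G M f g" and homeo: "homeomorphic_maps \<tau> \<sigma> f g"
  shows "top_ab_group M \<sigma>"
proof -
  have f: "f \<in> hom G M" "continuous_map \<tau> \<sigma> f" and g: "g \<in> hom M G" "continuous_map \<sigma> \<tau> g"
    and fg: "\<And>y. y \<in> carrier M \<Longrightarrow> f (g y) = y"
    using iso homeo by (auto simp: group_isomorphisms_def homeomorphic_maps_def)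
  have top: "topspace \<tau> = carrier G"
    and Gmult: "continuous_map (prod_topology \<tau> \<tau>) \<tau> (\<lambda>p. fst p \<otimes>\<^bsub>G\<^esub> snd p)"
    and Ginv: "continuous_map \<tau> \<tau> (\<lambda>x. inv\<^bsub>G\<^esub> x)"
    using G by (simp_all add: top_ab_group_def)
  interpret G: comm_group G using G by (simp add: top_ab_group_def)
  interpret M: comm_group M by (rule M)
  have topM: "topspace \<sigma> = carrier M"
  proof (intro equalityI subsetI)
    fix y assume "y \<in> topspace \<sigma>"
    then have "g y \<in> carrier G" and "f (g y) = y"
      using homeo top by (auto simp: homeomorphic_maps_def continuous_map_def)
    then show "y \<in> carrier M" using hom_in_carrier[OF f(1) \<open>g y \<in> carrier G\<close>] by simp
  next
    fix y assume y: "y \<in> carrier M"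
    have "g y \<in> topspace \<tau>" using hom_in_carrier[OF g(1) y] top by simp
    then have "f (g y) \<in> topspace \<sigma>" using continuous_map_image_subset_topspace[OF f(2)] by blast
    then show "y \<in> topspace \<sigma>" using fg[OF y] by simp
  qed
  have "continuous_map (prod_topology \<sigma> \<sigma>) (prod_topology \<tau> \<tau>) (\<lambda>p. (g (fst p), g (snd p)))"
    using continuous_map_compose[OF continuous_map_fst g(2)] continuous_map_compose[OF continuous_map_snd g(2)]
    by (intro continuous_map_pairedI) (simp_all add: o_def)
  from continuous_map_compose[OF continuous_map_compose[OF this Gmult] f(2)]
  have "continuous_map (prod_topology \<sigma> \<sigma>) \<sigma> (\<lambda>p. f (g (fst p) \<otimes>\<^bsub>G\<^esub> g (snd p)))"
    by (simp add: o_def)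
  then have mult: "continuous_map (prod_topology \<sigma> \<sigma>) \<sigma> (\<lambda>p. fst p \<otimes>\<^bsub>M\<^esub> snd p)"
    by (rule continuous_map_eq) (use f(1) g(1) fg topM in \<open>auto simp: hom_mult hom_in_carrier\<close>)
  from continuous_map_compose[OF continuous_map_compose[OF g(2) Ginv] f(2)]
  have "continuous_map \<sigma> \<sigma> (\<lambda>x. f (inv\<^bsub>G\<^esub> (g x)))" by (simp add: o_def)
  then have inv: "continuous_map \<sigma> \<sigma> (\<lambda>x. inv\<^bsub>M\<^esub> x)"
  proof (rule continuous_map_eq)
    interpret f: group_hom G M f by (simp add: group_hom_def group_hom_axioms_def f(1))
    fix x assume "x \<in> topspace \<sigma>"
    then show "f (inv\<^bsub>G\<^esub> (g x)) = inv\<^bsub>M\<^esub> x"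
      using topM fg f.hom_inv[of "g x"] hom_in_carrier[OF g(1)] by simp
  qed
  show ?thesis unfolding top_ab_group_def by (intro conjI M topM mult inv)
qed

lemma quasi_convex_iso_image:
  assumes V: "quasi_convex G \<tau> V"
    and iso: "group_isomorphisms G M f g" and homeo: "homeomorphic_maps \<tau> \<sigma> f g"
  shows "quasi_convex M \<sigma> (f ` V)"
  unfolding quasi_convex_def
proof (intro conjI ballI)
  have f: "f \<in> hom G M" and g: "g \<in> hom M G" "continuous_map \<sigma> \<tau> g"
    and gf: "\<And>x. x \<in> carrier G \<Longrightarrow> g (f x) = x" and fg: "\<And>y. y \<in> carrier M \<Longrightarrow> f (g y) = y"
    using iso homeo by (auto simp: group_isomorphisms_def homeomorphic_maps_def)
  have VG: "V \<subseteq> carrier G" using V by (simp add: quasi_convex_def)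
  then show "f ` V \<subseteq> carrier M" using hom_in_carrier[OF f] by blast
  fix b assume b: "b \<in> carrier M - f ` V"
  have "g b \<in> carrier G" using hom_in_carrier[OF g(1)] b by blast
  moreover have "g b \<notin> V" using fg b by (metis DiffE imageI)
  ultimately obtain ch where ch: "ch \<in> cont_chars G \<tau>" "\<forall>a\<in>V. tnorm (ch a) \<le> 1/4" "tnorm (ch (g b)) > 1/4"
    using V unfolding quasi_convex_def by blast
  have "ch \<circ> g \<in> cont_chars M \<sigma>" by (rule cont_chars_compose[OF ch(1) g])
  moreover have "\<forall>a\<in>f ` V. tnorm ((ch \<circ> g) a) \<le> 1/4" using ch(2) gf VG by auto
  moreover have "tnorm ((ch \<circ> g) b) > 1/4" using ch(3) by simp
  ultimately show "\<exists>ch\<in>cont_chars M \<sigma>. (\<forall>a\<in>f ` V. tnorm (ch a) \<le> 1/4) \<and> 1/4 < tnorm (ch b)"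
    by blast
qed

lemma in_Q_iso:
  assumes Q: "in_Q G \<tau>" and M: "comm_group M"
    and iso: "group_isomorphisms G M f g" and homeo: "homeomorphic_maps \<tau> \<sigma> f g"
  shows "in_Q M \<sigma>"
proof -
  have f: "f \<in> hom G M" "continuous_map \<tau> \<sigma> f"
    using iso homeo by (auto simp: group_isomorphisms_def homeomorphic_maps_def)
  have f1: "f \<one>\<^bsub>G\<^esub> = \<one>\<^bsub>M\<^esub>"
    using hom_one[OF f(1)] in_Q_D(2)[OF Q] M by (simp add: comm_group_def)
  have "\<exists>V. quasi_convex M \<sigma> V \<and> V \<subseteq> U \<and> (\<exists>W. openin \<sigma> W \<and> \<one>\<^bsub>M\<^esub> \<in> W \<and> W \<subseteq> V)"
    if U: "openin \<sigma> U" "\<one>\<^bsub>M\<^esub> \<in> U" for U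
  proof -
    have "openin \<tau> {x \<in> topspace \<tau>. f x \<in> U}" using f(2) U(1) by (simp add: continuous_map_def)
    moreover have "\<one>\<^bsub>G\<^esub> \<in> {x \<in> topspace \<tau>. f x \<in> U}"
      using U(2) in_Q_D(2,3)[OF Q] f1 by (simp add: group.is_monoid)
    ultimately obtain V W where V: "quasi_convex G \<tau> V" "V \<subseteq> {x \<in> topspace \<tau>. f x \<in> U}"
      and W: "openin \<tau> W" "\<one>\<^bsub>G\<^esub> \<in> W" "W \<subseteq> V"
      using Q unfolding in_Q_def by meson
    have "openin \<sigma> (f ` W)"
      using homeo W(1) homeomorphic_map_openness_eq homeomorphic_maps_imp_map by blast
    moreover have "\<one>\<^bsub>M\<^esub> \<in> f ` W" using W(2) imageI[of _ W f] by (simp add: f1 [symmetric])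
    moreover have "f ` W \<subseteq> f ` V" "f ` V \<subseteq> U" using W(3) V(2) by auto
    ultimately show ?thesis using quasi_convex_iso_image[OF V(1) iso homeo] by blast
  qed
  moreover have "Hausdorff_space \<sigma>"
    using in_Q_D(4)[OF Q] homeo homeomorphic_Hausdorff_space homeomorphic_space_def by blast
  moreover have "top_ab_group M \<sigma>"
    using top_ab_group_iso[OF _ M iso homeo] Q by (simp add: in_Q_def)
  ultimately show ?thesis unfolding in_Q_def by blast
qed

(* is_Q_tensor only quantifies over groups carried by the type 'm, so a group in Q on another
   type is first copied into 'm along an injection. *)
definition transport_grp :: "('a \<Rightarrow> 'b) \<Rightarrow> 'a monoid \<Rightarrow> 'b monoid" where
  "transport_grp f G = \<lparr>carrier = f ` carrier G,
     mult = (\<lambda>a b. f (inv_into UNIV f a \<otimes>\<^bsub>G\<^esub> inv_into UNIV f b)), one = f \<one>\<^bsub>G\<^esub>\<rparr>"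

definition transport_top :: "('a \<Rightarrow> 'b) \<Rightarrow> 'a topology \<Rightarrow> 'b topology" where
  "transport_top f X = pullback_topology (f ` topspace X) (inv_into UNIV f) X"

lemma transport_grp_simps [simp]:
  "carrier (transport_grp f G) = f ` carrier G"
  "mult (transport_grp f G) a b = f (inv_into UNIV f a \<otimes>\<^bsub>G\<^esub> inv_into UNIV f b)"
  "one (transport_grp f G) = f \<one>\<^bsub>G\<^esub>"
  by (simp_all add: transport_grp_def)

lemma comm_group_transport_grp:
  assumes f: "inj f" and G: "comm_group G"
  shows "comm_group (transport_grp f G)"
proof -
  interpret comm_group G by (rule G)
  show ?thesis
  proof (rule comm_groupI)
    fix x assume "x \<in> carrier (transport_grp f G)"
    then obtain x' where "x' \<in> carrier G" "x = f x'" by auto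
    then show "\<exists>y\<in>carrier (transport_grp f G). y \<otimes>\<^bsub>transport_grp f G\<^esub> x = \<one>\<^bsub>transport_grp f G\<^esub>"
      using f by (intro bexI[of _ "f (inv\<^bsub>G\<^esub> x')"]) auto
  qed (use f in \<open>auto simp: m_ac\<close>)
qed

lemma transport_isomorphisms:
  "inj f \<Longrightarrow> group_isomorphisms G (transport_grp f G) f (inv_into UNIV f)"
  by (auto simp: group_isomorphisms_def hom_def)

lemma transport_homeomorphic_maps:
  assumes f: "inj f"
  shows "homeomorphic_maps X (transport_top f X) f (inv_into UNIV f)"
  unfolding homeomorphic_maps_def transport_top_def
proof (intro conjI ballI)
  show "continuous_map X (pullback_topology (f ` topspace X) (inv_into UNIV f) X) f"
    by (rule continuous_map_pullback') (use f in \<open>auto simp: o_def\<close>)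
  show "continuous_map (pullback_topology (f ` topspace X) (inv_into UNIV f) X) X (inv_into UNIV f)"
    using continuous_map_pullback[OF continuous_map_id] by (simp add: id_def o_def)
qed (use f in \<open>auto simp: topspace_pullback_topology\<close>)

lemma in_Q_transport:
  "inj f \<Longrightarrow> in_Q G \<tau> \<Longrightarrow> in_Q (transport_grp f G) (transport_top f \<tau>)"
  by (metis in_Q_D(1) in_Q_iso comm_group_transport_grp transport_isomorphisms
      transport_homeomorphic_maps)

lemma cont_bihom_compose:
  assumes \<beta>: "cont_bihom G \<tau>G K \<tau>K L \<tau>L \<beta>" and \<psi>: "\<psi> \<in> hom L M" "continuous_map \<tau>L \<tau>M \<psi>"
    and groups: "group L" "group M" and top: "topspace \<tau>L = carrier L"
  shows "cont_bihom G \<tau>G K \<tau>K M \<tau>M (\<lambda>x y. \<psi> (\<beta> x y))"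
  unfolding cont_bihom_def
proof (intro conjI ballI allI impI)
  fix x assume "x \<in> carrier G"
  then have "\<beta> x \<in> hom K L" "continuous_map \<tau>K \<tau>L (\<beta> x)" using \<beta> by (simp_all add: cont_bihom_def)
  then show "(\<lambda>y. \<psi> (\<beta> x y)) \<in> hom K M" "continuous_map \<tau>K \<tau>M (\<lambda>y. \<psi> (\<beta> x y))"
    using hom_compose[OF _ \<psi>(1)] continuous_map_compose[OF _ \<psi>(2)] by (auto simp: o_def)
next
  fix y assume "y \<in> carrier K"
  then have "(\<lambda>x. \<beta> x y) \<in> hom G L" "continuous_map \<tau>G \<tau>L (\<lambda>x. \<beta> x y)"
    using \<beta> by (simp_all add: cont_bihom_def)
  then show "(\<lambda>x. \<psi> (\<beta> x y)) \<in> hom G M" "continuous_map \<tau>G \<tau>M (\<lambda>x. \<psi> (\<beta> x y))"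
    using hom_compose[OF _ \<psi>(1)] continuous_map_compose[OF _ \<psi>(2)] by (auto simp: o_def)
next
  fix U assume U: "openin \<tau>M U \<and> \<one>\<^bsub>M\<^esub> \<in> U"
  have "openin \<tau>L {z \<in> topspace \<tau>L. \<psi> z \<in> U}" using \<psi>(2) U by (simp add: continuous_map_def)
  moreover have "\<one>\<^bsub>L\<^esub> \<in> {z \<in> topspace \<tau>L. \<psi> z \<in> U}"
    using U top hom_one[OF \<psi>(1) groups] groups(1) by (simp add: group.is_monoid)
  ultimately show "\<exists>V W. openin \<tau>G V \<and> \<one>\<^bsub>G\<^esub> \<in> V \<and> openin \<tau>K W \<and> \<one>\<^bsub>K\<^esub> \<in> W \<and>
      (\<forall>x\<in>V. \<forall>y\<in>W. \<psi> (\<beta> x y) \<in> U)"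
    using \<beta> unfolding cont_bihom_def by fast
qed

lemma Q_tensor_universal:
  fixes f :: "'c \<Rightarrow> 'm" and M :: "'c monoid"
  assumes tensor: "is_Q_tensor G \<tau>G K \<tau>K L \<tau>L \<beta> TYPE('m)" and f: "inj f"
    and M: "in_Q M \<tau>M" and \<gamma>: "cont_bihom G \<tau>G K \<tau>K M \<tau>M \<gamma>"
  obtains \<phi> where "\<phi> \<in> hom L M" "continuous_map \<tau>L \<tau>M \<phi>"
    "\<And>x y. x \<in> carrier G \<Longrightarrow> y \<in> carrier K \<Longrightarrow> \<phi> (\<beta> x y) = \<gamma> x y"
    "\<And>\<psi> z. \<psi> \<in> hom L M \<Longrightarrow> continuous_map \<tau>L \<tau>M \<psi> \<Longrightarrow>
       (\<And>x y. x \<in> carrier G \<Longrightarrow> y \<in> carrier K \<Longrightarrow> \<psi> (\<beta> x y) = \<gamma> x y) \<Longrightarrow>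
       z \<in> carrier L \<Longrightarrow> \<psi> z = \<phi> z"
proof -
  let ?g = "inv_into UNIV f" and ?M = "transport_grp f M" and ?\<tau> = "transport_top f \<tau>M"
  have iso: "f \<in> hom M ?M" "?g \<in> hom ?M M" "\<And>x. ?g (f x) = x"
    using transport_isomorphisms[OF f, of M] f by (simp_all add: group_isomorphisms_def)
  have homeo: "continuous_map \<tau>M ?\<tau> f" "continuous_map ?\<tau> \<tau>M ?g"
    using transport_homeomorphic_maps[OF f, of \<tau>M] by (simp_all add: homeomorphic_maps_def)
  have groups: "group M" "group ?M" and topM: "topspace \<tau>M = carrier M"
    using in_Q_D[OF M] in_Q_D[OF in_Q_transport[OF f M]] by simp_all
  have "cont_bihom G \<tau>G K \<tau>K ?M ?\<tau> (\<lambda>x y. f (\<gamma> x y))"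
    by (rule cont_bihom_compose[OF \<gamma> iso(1) homeo(1) groups topM])
  then obtain \<phi>' where \<phi>': "\<phi>' \<in> hom L ?M" "continuous_map \<tau>L ?\<tau> \<phi>'"
      "\<forall>x\<in>carrier G. \<forall>y\<in>carrier K. \<phi>' (\<beta> x y) = f (\<gamma> x y)"
      "\<forall>\<psi>. \<psi> \<in> hom L ?M \<and> continuous_map \<tau>L ?\<tau> \<psi> \<and>
         (\<forall>x\<in>carrier G. \<forall>y\<in>carrier K. \<psi> (\<beta> x y) = f (\<gamma> x y)) \<longrightarrow> (\<forall>z\<in>carrier L. \<psi> z = \<phi>' z)"
    using tensor in_Q_transport[OF f M] unfolding is_Q_tensor_def by blast
  show ?thesis
  proof
    show "?g \<circ> \<phi>' \<in> hom L M" using hom_compose[OF \<phi>'(1) iso(2)] .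
    show "continuous_map \<tau>L \<tau>M (?g \<circ> \<phi>')" using continuous_map_compose[OF \<phi>'(2) homeo(2)] .
    show "(?g \<circ> \<phi>') (\<beta> x y) = \<gamma> x y" if "x \<in> carrier G" "y \<in> carrier K" for x y
      using \<phi>'(3) that iso(3) by simp
    fix \<psi> z assume \<psi>: "\<psi> \<in> hom L M" "continuous_map \<tau>L \<tau>M \<psi>"
      and \<psi>\<beta>: "\<And>x y. x \<in> carrier G \<Longrightarrow> y \<in> carrier K \<Longrightarrow> \<psi> (\<beta> x y) = \<gamma> x y"
      and z: "z \<in> carrier L"
    have "f \<circ> \<psi> \<in> hom L ?M" "continuous_map \<tau>L ?\<tau> (f \<circ> \<psi>)"
      using hom_compose[OF \<psi>(1) iso(1)] continuous_map_compose[OF \<psi>(2) homeo(1)] .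
    moreover have "\<forall>x\<in>carrier G. \<forall>y\<in>carrier K. (f \<circ> \<psi>) (\<beta> x y) = f (\<gamma> x y)"
      using \<psi>\<beta> by simp
    ultimately have "f (\<psi> z) = \<phi>' z" using \<phi>'(4) z by fastforce
    then show "\<psi> z = (?g \<circ> \<phi>') z" using iso(3) by (metis comp_apply)
  qed
qed

lemma Q_tensor_hom_unique:
  fixes f :: "'c \<Rightarrow> 'm" and M :: "'c monoid"
  assumes tensor: "is_Q_tensor G \<tau>G K \<tau>K L \<tau>L \<beta> TYPE('m)" and f: "inj f" and M: "in_Q M \<tau>M"
    and \<psi>: "\<psi>1 \<in> hom L M" "continuous_map \<tau>L \<tau>M \<psi>1" "\<psi>2 \<in> hom L M" "continuous_map \<tau>L \<tau>M \<psi>2"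
    and agree: "\<And>x y. x \<in> carrier G \<Longrightarrow> y \<in> carrier K \<Longrightarrow> \<psi>1 (\<beta> x y) = \<psi>2 (\<beta> x y)"
    and z: "z \<in> carrier L"
  shows "\<psi>1 z = \<psi>2 z"
proof -
  have L: "in_Q L \<tau>L" and \<beta>: "cont_bihom G \<tau>G K \<tau>K L \<tau>L \<beta>"
    using tensor by (simp_all add: is_Q_tensor_def)
  have \<gamma>: "cont_bihom G \<tau>G K \<tau>K M \<tau>M (\<lambda>x y. \<psi>1 (\<beta> x y))"
    using cont_bihom_compose[OF \<beta> \<psi>(1,2)] in_Q_D[OF L] in_Q_D[OF M] by simp
  obtain \<phi> where "\<phi> \<in> hom L M" "continuous_map \<tau>L \<tau>M \<phi>"
    "\<And>x y. x \<in> carrier G \<Longrightarrow> y \<in> carrier K \<Longrightarrow> \<phi> (\<beta> x y) = \<psi>1 (\<beta> x y)"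
    and unique: "\<And>\<psi> z. \<psi> \<in> hom L M \<Longrightarrow> continuous_map \<tau>L \<tau>M \<psi> \<Longrightarrow>
       (\<And>x y. x \<in> carrier G \<Longrightarrow> y \<in> carrier K \<Longrightarrow> \<psi> (\<beta> x y) = \<psi>1 (\<beta> x y)) \<Longrightarrow>
       z \<in> carrier L \<Longrightarrow> \<psi> z = \<phi> z"
    using Q_tensor_universal[OF tensor f M \<gamma>] by blast
  have "\<psi>1 z = \<phi> z" by (rule unique[OF \<psi>(1,2) refl z])
  moreover have "\<psi>2 z = \<phi> z" by (rule unique[OF \<psi>(3,4) agree[symmetric] z])
  ultimately show ?thesis by simp
qed

section \<open>The groups \<open>\<int>\<^sup>I\<close> and \<open>H\<close>\<close>

lemma ZI_grp_simps [simp]: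
  "carrier ZI_grp = UNIV" "mult ZI_grp x y = (\<lambda>i. x i + y i)" "one ZI_grp = (\<lambda>i. 0)"
  by (simp_all add: ZI_grp_def)

lemma comm_group_ZI: "comm_group ZI_grp"
proof (rule comm_groupI)
  fix x :: "'i \<Rightarrow> int"
  show "\<exists>y\<in>carrier ZI_grp. y \<otimes>\<^bsub>ZI_grp\<^esub> x = \<one>\<^bsub>ZI_grp\<^esub>"
    by (intro bexI[of _ "\<lambda>i. - x i"]) auto
qed (auto simp: algebra_simps)

lemma group_ZI: "group ZI_grp"
  using comm_group_ZI comm_group_def by blast

lemma ZI_int_pow:
  fixes x :: "'i \<Rightarrow> int"
  shows "x [^]\<^bsub>ZI_grp\<^esub> (k::int) = (\<lambda>i. k * x i)"
proof -
  have nat_pow: "x [^]\<^bsub>ZI_grp\<^esub> (n::nat) = (\<lambda>i. int n * x i)" for n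
    by (induction n) (auto simp: algebra_simps)
  have "inv\<^bsub>ZI_grp\<^esub> y = (\<lambda>i. - y i)" for y :: "'i \<Rightarrow> int"
    using group_ZI by (intro group.inv_equality) auto
  then show ?thesis by (auto simp: int_pow_def2 nat_pow)
qed

lemma topspace_ZI_top [simp]: "topspace ZI_top = UNIV"
  by (simp add: ZI_top_def)

definition cyl :: "'i set \<Rightarrow> ('i \<Rightarrow> int) \<Rightarrow> ('i \<Rightarrow> int) set" where
  "cyl S y = {x. \<forall>i\<in>S. x i = y i}"

lemma openin_ZI_cyl:
  assumes "finite S"
  shows "openin ZI_top (cyl S y)"
  unfolding ZI_top_def openin_product_topology_alt
proof
  fix x assume x: "x \<in> cyl S y"
  define U where "U i = (if i \<in> S then {y i} else (UNIV :: int set))" for i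
  have "{i \<in> UNIV. U i \<noteq> topspace (discrete_topology UNIV)} \<subseteq> S" by (auto simp: U_def)
  then have "finite {i \<in> UNIV. U i \<noteq> topspace (discrete_topology UNIV)}"
    using assms by (rule finite_subset)
  moreover have "x \<in> Pi\<^sub>E UNIV U" "Pi\<^sub>E UNIV U \<subseteq> cyl S y"
    using x by (auto simp: U_def cyl_def PiE_iff split: if_splits)
  ultimately show "\<exists>U. finite {i \<in> UNIV. U i \<noteq> topspace (discrete_topology UNIV)} \<and>
      (\<forall>i\<in>UNIV. openin (discrete_topology UNIV) (U i)) \<and> x \<in> Pi\<^sub>E UNIV U \<and> Pi\<^sub>E UNIV U \<subseteq> cyl S y"
    by auto
qed

lemma ZI_nhd_contains_cyl:
  assumes "openin ZI_top V" "y \<in> V"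
  obtains S where "finite S" "cyl S y \<subseteq> V"
proof -
  obtain U where U: "finite {i. U i \<noteq> (UNIV :: int set)}" "y \<in> Pi\<^sub>E UNIV U" "Pi\<^sub>E UNIV U \<subseteq> V"
    using assms unfolding ZI_top_def openin_product_topology_alt by auto
  have "x \<in> Pi\<^sub>E UNIV U" if "x \<in> cyl {i. U i \<noteq> UNIV} y" for x
    using U(2) that by (auto simp: cyl_def PiE_iff) (metis UNIV_I)
  then have "cyl {i. U i \<noteq> UNIV} y \<subseteq> Pi\<^sub>E UNIV U" by blast
  then show ?thesis using U(1) U(3) by (intro that) auto
qed

lemma continuous_map_ZI_finite_dependence:
  assumes "finite S" and dep: "\<And>x y. (\<forall>i\<in>S. x i = y i) \<Longrightarrow> F x = F y"
    and range: "\<And>x. F x \<in> topspace Y"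
  shows "continuous_map ZI_top Y F"
  unfolding continuous_map_def
proof (intro conjI allI impI)
  show "F \<in> topspace ZI_top \<rightarrow> topspace Y" using range by simp
  fix U assume "openin Y U"
  show "openin ZI_top {x \<in> topspace ZI_top. F x \<in> U}"
  proof (subst openin_subopen, intro ballI)
    fix x assume x: "x \<in> {x \<in> topspace ZI_top. F x \<in> U}"
    have "cyl S x \<subseteq> {x \<in> topspace ZI_top. F x \<in> U}"
    proof
      fix z assume "z \<in> cyl S x"
      then have "F z = F x" by (intro dep) (simp add: cyl_def)
      then show "z \<in> {x \<in> topspace ZI_top. F x \<in> U}" using x by simp
    qed
    moreover have "x \<in> cyl S x" by (simp add: cyl_def)
    ultimately show "\<exists>T. openin ZI_top T \<and> x \<in> T \<and> T \<subseteq> {x \<in> topspace ZI_top. F x \<in> U}"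
      using openin_ZI_cyl[OF \<open>finite S\<close>] by blast
  qed
qed

lemma H_grp_simps [simp]:
  "carrier H_grp = {g. finite {i. g i \<noteq> 0}}" "mult H_grp x y = (\<lambda>i. x i + y i)"
  "one H_grp = (\<lambda>i. 0)"
  by (simp_all add: H_grp_def)

lemma H_add_closed:
  assumes "g \<in> carrier H_grp" "h \<in> carrier H_grp"
  shows "(\<lambda>i. g i + h i) \<in> carrier H_grp"
proof -
  have "{i. g i + h i \<noteq> 0} \<subseteq> {i. g i \<noteq> 0} \<union> {i. h i \<noteq> 0}" by auto
  moreover have "finite ({i. g i \<noteq> 0} \<union> {i. h i \<noteq> 0})" using assms by simp
  ultimately show ?thesis by (simp add: finite_subset)
qed

lemma pairing_eq_sum:
  assumes "finite S" "{i. g i \<noteq> 0} \<subseteq> S"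
  shows "pairing g x = (\<Sum>i\<in>S. g i * x i)"
  unfolding pairing_def using assms by (intro sum.mono_neutral_left) auto

lemma pairing_add_left:
  assumes "g \<in> carrier H_grp" "h \<in> carrier H_grp"
  shows "pairing (\<lambda>i. g i + h i) x = pairing g x + pairing h x"
proof -
  define S where "S = {i. g i \<noteq> 0} \<union> {i. h i \<noteq> 0}"
  have S: "finite S" using assms by (simp add: S_def)
  have "pairing (\<lambda>i. g i + h i) x = (\<Sum>i\<in>S. (g i + h i) * x i)"
    using S by (intro pairing_eq_sum) (auto simp: S_def)
  also have "\<dots> = (\<Sum>i\<in>S. g i * x i) + (\<Sum>i\<in>S. h i * x i)"
    by (simp add: algebra_simps sum.distrib)
  also have "\<dots> = pairing g x + pairing h x"
    using S pairing_eq_sum[of S g x] pairing_eq_sum[of S h x] by (simp add: S_def)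
  finally show ?thesis .
qed

lemma pairing_add_right: "pairing g (\<lambda>i. x i + y i) = pairing g x + pairing g y"
  unfolding pairing_def by (simp add: algebra_simps sum.distrib)

lemma pairing_eq_0: "(\<And>i. g i \<noteq> 0 \<Longrightarrow> x i = 0) \<Longrightarrow> pairing g x = 0"
  unfolding pairing_def by (intro sum.neutral) auto

definition unit_vec :: "'i \<Rightarrow> 'i \<Rightarrow> int" where
  "unit_vec a = (\<lambda>i. if i = a then 1 else 0)"

lemma unit_vec_in_H: "unit_vec a \<in> carrier H_grp"
proof -
  have "{i. unit_vec a i \<noteq> 0} = {a}" by (auto simp: unit_vec_def)
  then show ?thesis by simp
qed

lemma unit_vec_self [simp]: "unit_vec a a = 1"
  by (simp add: unit_vec_def)

lemma pairing_unit_vec: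
  assumes "g \<in> carrier H_grp"
  shows "pairing g (unit_vec a) = g a"
proof -
  have "pairing g (unit_vec a) = (\<Sum>i\<in>insert a {i. g i \<noteq> 0}. g i * unit_vec a i)"
    using assms by (intro pairing_eq_sum) auto
  also have "\<dots> = (\<Sum>i\<in>insert a {i. g i \<noteq> 0}. if i = a then g a else 0)"
    by (intro sum.cong) (auto simp: unit_vec_def)
  also have "\<dots> = g a" using assms by simp
  finally show ?thesis .
qed

lemma topspace_H_top [simp]: "topspace H_top = carrier H_grp"
proof -
  have "carrier H_grp \<in> {{g \<in> carrier H_grp. pairing g x = k} | x k. True}"
    by (intro CollectI exI[of _ "\<lambda>i. 0"] exI[of _ "0::int"]) (simp add: pairing_def)
  then show ?thesis unfolding H_top_def by auto
qed

lemma continuous_map_H_pairing: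
  assumes c: "\<And>g. g \<in> carrier H_grp \<Longrightarrow> c g = F (pairing g x)" and F: "\<And>k. F k \<in> {0..<1}"
  shows "continuous_map H_top T_top c"
  unfolding continuous_map_def
proof (intro conjI allI impI)
  show "c \<in> topspace H_top \<rightarrow> topspace T_top" using c F by simp
  fix U assume "openin T_top U"
  have "{g \<in> topspace H_top. c g \<in> U} = (\<Union>k\<in>{k. F k \<in> U}. {g \<in> carrier H_grp. pairing g x = k})"
    using c by auto
  moreover have "openin H_top {g \<in> carrier H_grp. pairing g x = k}" for k
    unfolding H_top_def openin_topology_generated_by_iff by (rule generate_topology_on.Basis) blast
  ultimately show "openin H_top {g \<in> topspace H_top. c g \<in> U}" by (simp add: openin_clauses(3))
qed

section \<open>The dual group of \<open>H\<close>\<close>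

lemma Hhat_carrier: "carrier Hhat_grp = cont_chars H_grp H_top \<inter> extensional (carrier H_grp)"
  by (simp add: Hhat_grp_def)

lemma Hhat_grp_simps [simp]:
  "mult Hhat_grp a b = restrict (\<lambda>g. frac (a g + b g)) (carrier H_grp)"
  "one Hhat_grp = restrict (\<lambda>g. 0) (carrier H_grp)"
  by (simp_all add: Hhat_grp_def)

lemma Hhat_restrict_in:
  fixes \<eta> :: "('i \<Rightarrow> int) \<Rightarrow> real"
  assumes "\<eta> \<in> hom H_grp T_grp" "continuous_map H_top T_top \<eta>"
  shows "restrict \<eta> (carrier H_grp) \<in> carrier Hhat_grp"
proof -
  have "restrict \<eta> (carrier H_grp) \<in> hom H_grp T_grp"
  proof (rule homI)
    fix x y :: "'i \<Rightarrow> int" assume xy: "x \<in> carrier H_grp" "y \<in> carrier H_grp"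
    have "(\<lambda>i. x i + y i) \<in> carrier H_grp" using H_add_closed[OF xy] .
    then show "restrict \<eta> (carrier H_grp) (x \<otimes>\<^bsub>H_grp\<^esub> y) =
        restrict \<eta> (carrier H_grp) x \<otimes>\<^bsub>T_grp\<^esub> restrict \<eta> (carrier H_grp) y"
      using hom_T_add[OF assms(1) xy] xy by simp
  qed (use hom_T_range[OF assms(1)] in simp)
  moreover have "continuous_map H_top T_top (restrict \<eta> (carrier H_grp))"
    using assms(2) by (rule continuous_map_eq) simp
  ultimately show ?thesis by (simp add: Hhat_carrier cont_chars_def)
qed

lemma Hhat_memD:
  assumes "a \<in> carrier Hhat_grp"
  shows "a \<in> hom H_grp T_grp" "continuous_map H_top T_top a" "a \<in> extensional (carrier H_grp)"
  using assms by (simp_all add: Hhat_carrier cont_chars_def)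

lemma Hhat_range: "a \<in> carrier Hhat_grp \<Longrightarrow> g \<in> carrier H_grp \<Longrightarrow> a g \<in> {0..<1}"
  using hom_T_range[OF Hhat_memD(1)] by blast

lemma Hhat_neg_in:
  assumes a: "a \<in> carrier Hhat_grp"
  shows "restrict (\<lambda>g. frac (- a g)) (carrier H_grp) \<in> carrier Hhat_grp"
proof -
  have "continuous_map H_top T_top (\<lambda>g. frac (- a g))"
    using continuous_map_T_mult_int[OF Hhat_memD(2)[OF a], of "-1"] by simp
  then show ?thesis by (rule Hhat_restrict_in[OF hom_T_neg[OF Hhat_memD(1)[OF a]]])
qed

lemma comm_group_Hhat: "comm_group (Hhat_grp :: (('i \<Rightarrow> int) \<Rightarrow> real) monoid)"
proof (rule comm_groupI)
  fix a b :: "('i \<Rightarrow> int) \<Rightarrow> real" assume a: "a \<in> carrier Hhat_grp" and b: "b \<in> carrier Hhat_grp"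
  show "a \<otimes>\<^bsub>Hhat_grp\<^esub> b \<in> carrier Hhat_grp"
    using Hhat_restrict_in[OF hom_T_sum[OF Hhat_memD(1)[OF a] Hhat_memD(1)[OF b]]
        continuous_map_T_add[OF Hhat_memD(2)[OF a] Hhat_memD(2)[OF b]]] by simp
next
  show "\<one>\<^bsub>Hhat_grp\<^esub> \<in> carrier Hhat_grp"
    using Hhat_restrict_in[of "\<lambda>g. 0"] by (simp add: hom_def)
next
  fix a b c :: "('i \<Rightarrow> int) \<Rightarrow> real" assume "a \<in> carrier Hhat_grp" "b \<in> carrier Hhat_grp" "c \<in> carrier Hhat_grp"
  show "a \<otimes>\<^bsub>Hhat_grp\<^esub> b \<otimes>\<^bsub>Hhat_grp\<^esub> c = a \<otimes>\<^bsub>Hhat_grp\<^esub> (b \<otimes>\<^bsub>Hhat_grp\<^esub> c)"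
    by (rule ext) (simp add: ac_simps)
next
  fix a b :: "('i \<Rightarrow> int) \<Rightarrow> real" assume "a \<in> carrier Hhat_grp" "b \<in> carrier Hhat_grp"
  show "a \<otimes>\<^bsub>Hhat_grp\<^esub> b = b \<otimes>\<^bsub>Hhat_grp\<^esub> a" by (rule ext) (simp add: ac_simps)
next
  fix a :: "('i \<Rightarrow> int) \<Rightarrow> real" assume a: "a \<in> carrier Hhat_grp"
  then have "\<one>\<^bsub>Hhat_grp\<^esub> \<otimes>\<^bsub>Hhat_grp\<^esub> a = restrict a (carrier H_grp)"
    using hom_T_range[OF Hhat_memD(1)[OF a]] by (intro ext) simp
  then show "\<one>\<^bsub>Hhat_grp\<^esub> \<otimes>\<^bsub>Hhat_grp\<^esub> a = a"
    using Hhat_memD(3)[OF a] by (simp add: extensional_restrict)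
  have "restrict (\<lambda>g. frac (- a g)) (carrier H_grp) \<otimes>\<^bsub>Hhat_grp\<^esub> a = \<one>\<^bsub>Hhat_grp\<^esub>"
    by (intro ext) simp
  then show "\<exists>b\<in>carrier Hhat_grp. b \<otimes>\<^bsub>Hhat_grp\<^esub> a = \<one>\<^bsub>Hhat_grp\<^esub>"
    using Hhat_neg_in[OF a] by blast
qed

lemma group_Hhat: "group (Hhat_grp :: (('i \<Rightarrow> int) \<Rightarrow> real) monoid)"
  using comm_group_Hhat comm_group_def by blast

lemma Hhat_inv:
  "a \<in> carrier Hhat_grp \<Longrightarrow> inv\<^bsub>Hhat_grp\<^esub> a = restrict (\<lambda>g. frac (- a g)) (carrier H_grp)"
  using Hhat_neg_in by (intro group.inv_equality[OF group_Hhat]) (auto simp: fun_eq_iff)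

lemma Hhat_eval_hom: "g \<in> carrier H_grp \<Longrightarrow> (\<lambda>a. a g) \<in> hom Hhat_grp T_grp"
  using Hhat_range[of _ g] by (intro homI) simp_all

(* The statement puts no topology on the dual; pointwise convergence makes it a group in Q
   for which the canonical bihomomorphism below is continuous. *)
definition Hhat_top :: "(('i \<Rightarrow> int) \<Rightarrow> real) topology" where
  "Hhat_top = subtopology (product_topology (\<lambda>_. T_top) (carrier H_grp)) (carrier Hhat_grp)"

lemma topspace_Hhat_top [simp]:
  "topspace (Hhat_top :: (('i \<Rightarrow> int) \<Rightarrow> real) topology) = carrier Hhat_grp"
proof -
  have "a \<in> (\<Pi>\<^sub>E g\<in>carrier H_grp. {0..<1})" if "a \<in> carrier Hhat_grp" for a :: "('i \<Rightarrow> int) \<Rightarrow> real"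
    unfolding PiE_iff using Hhat_memD(3)[OF that] Hhat_range[OF that] by blast
  then have "(carrier Hhat_grp :: (('i \<Rightarrow> int) \<Rightarrow> real) set) \<subseteq> (\<Pi>\<^sub>E g\<in>carrier H_grp. {0..<1})"
    by blast
  then show ?thesis by (auto simp: Hhat_top_def)
qed

lemma continuous_map_Hhat_eval:
  "g \<in> carrier H_grp \<Longrightarrow> continuous_map Hhat_top T_top (\<lambda>a. a g)"
  unfolding Hhat_top_def
  by (intro continuous_map_from_subtopology continuous_map_product_projection)

lemma continuous_map_into_Hhat:
  assumes "\<And>x. x \<in> topspace X \<Longrightarrow> f x \<in> carrier Hhat_grp"
    and "\<And>g. g \<in> carrier H_grp \<Longrightarrow> continuous_map X T_top (\<lambda>x. f x g)"
  shows "continuous_map X Hhat_top f"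
  unfolding Hhat_top_def
  using assms Hhat_memD(3) by (intro continuous_map_into_subtopology) (auto simp: continuous_map_componentwise)

lemma top_ab_group_Hhat: "top_ab_group (Hhat_grp :: (('i \<Rightarrow> int) \<Rightarrow> real) monoid) Hhat_top"
  unfolding top_ab_group_def
proof (intro conjI comm_group_Hhat topspace_Hhat_top)
  interpret comm_group "Hhat_grp :: (('i \<Rightarrow> int) \<Rightarrow> real) monoid" by (rule comm_group_Hhat)
  show "continuous_map (prod_topology Hhat_top Hhat_top) Hhat_top
      (\<lambda>p. fst p \<otimes>\<^bsub>(Hhat_grp :: (('i \<Rightarrow> int) \<Rightarrow> real) monoid)\<^esub> snd p)"
  proof (rule continuous_map_into_Hhat)
    fix g :: "'i \<Rightarrow> int" assume g: "g \<in> carrier H_grp"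
    have "continuous_map (prod_topology Hhat_top Hhat_top) T_top (\<lambda>p. frac (fst p g + snd p g))"
      using continuous_map_compose[OF continuous_map_fst continuous_map_Hhat_eval[OF g]]
        continuous_map_compose[OF continuous_map_snd continuous_map_Hhat_eval[OF g]]
      by (intro continuous_map_T_add) (simp_all add: o_def)
    then show "continuous_map (prod_topology Hhat_top Hhat_top) T_top
        (\<lambda>p. (fst p \<otimes>\<^bsub>Hhat_grp\<^esub> snd p) g)" using g by simp
  qed (auto simp del: Hhat_grp_simps)
  show "continuous_map Hhat_top Hhat_top (\<lambda>a. inv\<^bsub>(Hhat_grp :: (('i \<Rightarrow> int) \<Rightarrow> real) monoid)\<^esub> a)"
  proof (rule continuous_map_into_Hhat)
    fix g :: "'i \<Rightarrow> int" assume g: "g \<in> carrier H_grp"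
    have "continuous_map Hhat_top T_top (\<lambda>a. frac (- a g))"
      using continuous_map_T_mult_int[OF continuous_map_Hhat_eval[OF g], of "-1"] by simp
    then show "continuous_map Hhat_top T_top (\<lambda>a. (inv\<^bsub>Hhat_grp\<^esub> a) g)"
      by (rule continuous_map_eq) (use g in \<open>simp add: Hhat_inv\<close>)
  qed auto
qed

lemma Hausdorff_Hhat: "Hausdorff_space Hhat_top"
  unfolding Hhat_top_def
  by (intro Hausdorff_space_subtopology) (simp add: Hausdorff_space_product_topology Hausdorff_T)

lemma Hhat_nhd_one_contains_basic:
  fixes U :: "(('i \<Rightarrow> int) \<Rightarrow> real) set"
  assumes "openin Hhat_top U" "\<one>\<^bsub>Hhat_grp\<^esub> \<in> U"
  obtains F e where "finite F" "F \<subseteq> carrier H_grp" "e > 0"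
    "{a \<in> carrier Hhat_grp. \<forall>g\<in>F. tnorm (a g) < e} \<subseteq> U"
proof -
  obtain S where S: "openin (product_topology (\<lambda>_. T_top) (carrier H_grp)) S"
    "U = S \<inter> carrier Hhat_grp"
    using assms(1) by (auto simp: Hhat_top_def openin_subtopology)
  then obtain V where V: "finite {g \<in> carrier H_grp. V g \<noteq> {0..<1}}"
    "\<And>g. g \<in> carrier H_grp \<Longrightarrow> openin T_top (V g)"
    "\<one>\<^bsub>Hhat_grp\<^esub> \<in> (\<Pi>\<^sub>E g\<in>carrier H_grp. V g)" "(\<Pi>\<^sub>E g\<in>carrier H_grp. V g) \<subseteq> S"
    using assms(2) unfolding openin_product_topology_alt by (auto simp del: Hhat_grp_simps)
  define F where "F = {g \<in> carrier H_grp. V g \<noteq> {0..<1}}"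
  have "\<exists>e>0. \<forall>y\<in>{0..<1}. tnorm y < e \<longrightarrow> y \<in> V g" if "g \<in> carrier H_grp" for g
  proof -
    have "0 \<in> V g" using V(3) that by (auto simp: PiE_iff)
    then show ?thesis using V(2)[OF that] unfolding openin_T_iff by fastforce
  qed
  then obtain E where E: "\<And>g. g \<in> carrier H_grp \<Longrightarrow> E g > 0"
    "\<And>g y. g \<in> carrier H_grp \<Longrightarrow> y \<in> {0..<1} \<Longrightarrow> tnorm y < E g \<Longrightarrow> y \<in> V g"
    by metis
  define e where "e = Min (insert 1 (E ` F))"
  have fin: "finite (insert 1 (E ` F))" using V(1) by (simp add: F_def)
  have e: "e > 0" "\<And>g. g \<in> F \<Longrightarrow> e \<le> E g"
    using fin E(1) by (auto simp: e_def F_def)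
  have "a \<in> U" if a: "a \<in> carrier Hhat_grp" "\<forall>g\<in>F. tnorm (a g) < e" for a
  proof -
    have "a g \<in> V g" if g: "g \<in> carrier H_grp" for g
    proof (cases "g \<in> F")
      case True
      then show ?thesis using E(2)[OF g Hhat_range[OF a(1) g]] a(2) e(2) by fastforce
    next
      case False
      then show ?thesis using Hhat_range[OF a(1) g] g by (simp add: F_def)
    qed
    then have "a \<in> (\<Pi>\<^sub>E g\<in>carrier H_grp. V g)" using Hhat_memD(3)[OF a(1)] by (simp add: PiE_iff)
    then show ?thesis using V(4) S(2) a(1) by blast
  qed
  then show ?thesis using that[of F e] V(1) e(1) by (auto simp: F_def)
qed

definition Hhat_qc_nhd :: "('i \<Rightarrow> int) set \<Rightarrow> nat \<Rightarrow> (('i \<Rightarrow> int) \<Rightarrow> real) set" where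
  "Hhat_qc_nhd F n =
     {a \<in> carrier Hhat_grp. \<forall>g\<in>F. \<forall>k::nat. 1 \<le> k \<and> k \<le> n \<longrightarrow> tnorm (real k * a g) \<le> 1/4}"

lemma quasi_convex_Hhat_qc_nhd:
  fixes F :: "('i \<Rightarrow> int) set"
  assumes F: "F \<subseteq> carrier H_grp"
  shows "quasi_convex Hhat_grp Hhat_top (Hhat_qc_nhd F n)"
  unfolding quasi_convex_def
proof (intro conjI ballI)
  fix b assume "b \<in> carrier Hhat_grp - Hhat_qc_nhd F n"
  then obtain g and k :: nat where g: "g \<in> F" and k: "1 \<le> k" "k \<le> n"
    and big: "tnorm (real k * b g) > 1/4"
    by (auto simp: Hhat_qc_nhd_def)
  define ch where "ch a = frac (of_int (int k) * a g)" for a :: "('i \<Rightarrow> int) \<Rightarrow> real"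
  have "ch \<in> hom Hhat_grp T_grp"
    unfolding ch_def using hom_compose[OF Hhat_eval_hom[of g] T_mult_int_hom[of "int k"]] F g
    by (auto simp: o_def)
  moreover have "continuous_map Hhat_top T_top ch"
    unfolding ch_def using F g by (intro continuous_map_T_mult_int continuous_map_Hhat_eval) auto
  ultimately show "\<exists>ch\<in>cont_chars Hhat_grp Hhat_top.
      (\<forall>a\<in>Hhat_qc_nhd F n. tnorm (ch a) \<le> 1/4) \<and> 1/4 < tnorm (ch b)"
    using g k big by (intro bexI[of _ ch]) (auto simp: ch_def cont_chars_def Hhat_qc_nhd_def)
qed (auto simp: Hhat_qc_nhd_def)

lemma Hhat_qc_nhd_small:
  fixes F :: "('i \<Rightarrow> int) set"
  shows "n \<ge> 1 \<Longrightarrow> a \<in> Hhat_qc_nhd F n \<Longrightarrow> g \<in> F \<Longrightarrow> tnorm (a g) \<le> 1 / (4 * real n)"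
  by (rule tnorm_le_if_multiples_le) (auto simp: Hhat_qc_nhd_def)

lemma Hhat_qc_nhd_contains_open:
  fixes F :: "('i \<Rightarrow> int) set"
  assumes F: "finite F" "F \<subseteq> carrier H_grp" and n: "n \<ge> 1"
  obtains W where "openin Hhat_top W" "\<one>\<^bsub>Hhat_grp\<^esub> \<in> W" "W \<subseteq> Hhat_qc_nhd F n"
proof -
  define W where "W = {a \<in> carrier Hhat_grp. \<forall>g\<in>F. tnorm (a g) < 1 / (4 * real n)}"
  have "W = (\<Inter>g\<in>F. {a \<in> topspace Hhat_top. a g \<in> tball 0 (1 / (4 * real n))}) \<inter> topspace Hhat_top"
    using F(2) Hhat_range by (auto simp: W_def tball_def)
  also have "openin Hhat_top \<dots>"
    using F continuous_map_Hhat_eval openin_tball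
    by (intro openin_INT openin_continuous_map_preimage) auto
  finally have "openin Hhat_top W" .
  moreover have "\<one>\<^bsub>Hhat_grp\<^esub> \<in> W"
  proof -
    have "\<one>\<^bsub>Hhat_grp\<^esub> \<in> carrier Hhat_grp"
      by (rule monoid.one_closed[OF group.is_monoid[OF group_Hhat]])
    moreover have "\<one>\<^bsub>Hhat_grp\<^esub> g = 0" if "g \<in> F" for g using F(2) that by auto
    ultimately show ?thesis using n by (simp add: W_def tnorm_def)
  qed
  moreover have "W \<subseteq> Hhat_qc_nhd F n"
  proof
    fix a assume a: "a \<in> W"
    have "tnorm (real k * a g) \<le> 1/4" if "g \<in> F" "1 \<le> k" "k \<le> n" for g k
    proof -
      have "tnorm (real k * a g) \<le> real k * tnorm (a g)" by (rule tnorm_mult_nat)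
      also have "\<dots> \<le> real n * (1 / (4 * real n))"
        using a that by (intro mult_mono) (auto simp: W_def tnorm_nonneg less_imp_le)
      finally show ?thesis using n by simp
    qed
    then show "a \<in> Hhat_qc_nhd F n" using a by (auto simp: Hhat_qc_nhd_def W_def)
  qed
  ultimately show ?thesis by (rule that)
qed

lemma in_Q_Hhat: "in_Q (Hhat_grp :: (('i \<Rightarrow> int) \<Rightarrow> real) monoid) Hhat_top"
  unfolding in_Q_def
proof (intro conjI top_ab_group_Hhat Hausdorff_Hhat allI impI)
  fix U :: "(('i \<Rightarrow> int) \<Rightarrow> real) set" assume U: "openin Hhat_top U \<and> \<one>\<^bsub>Hhat_grp\<^esub> \<in> U"
  then obtain F e where F: "finite F" "F \<subseteq> carrier H_grp" and e: "e > 0"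
    and basic: "{a \<in> carrier Hhat_grp. \<forall>g\<in>F. tnorm (a g) < e} \<subseteq> U"
    using Hhat_nhd_one_contains_basic[of U] by blast
  obtain n :: nat where n0: "1 / e < real n" using reals_Archimedean2 by blast
  moreover have "1 / e > 0" using e by simp
  ultimately have "real n > 0" by linarith
  then have n: "n \<ge> 1" "1 / (4 * real n) < e"
    using n0 e by (simp_all add: field_simps)
  have "a \<in> U" if a: "a \<in> Hhat_qc_nhd F n" for a
  proof -
    have "tnorm (a g) < e" if "g \<in> F" for g
      using Hhat_qc_nhd_small[OF n(1) a that] n(2) by linarith
    moreover have "a \<in> carrier Hhat_grp" using a by (simp add: Hhat_qc_nhd_def)
    ultimately show ?thesis using basic by blast
  qed
  then have "Hhat_qc_nhd F n \<subseteq> U" by blast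
  moreover obtain W where "openin Hhat_top W" "\<one>\<^bsub>Hhat_grp\<^esub> \<in> W" "W \<subseteq> Hhat_qc_nhd F n"
    by (rule Hhat_qc_nhd_contains_open[OF F n(1)])
  ultimately show "\<exists>V. quasi_convex Hhat_grp Hhat_top V \<and> V \<subseteq> U \<and>
      (\<exists>W. openin Hhat_top W \<and> \<one>\<^bsub>Hhat_grp\<^esub> \<in> W \<and> W \<subseteq> V)"
    using quasi_convex_Hhat_qc_nhd[OF F(2)] by blast
qed

section \<open>Characters of the Q-tensor product\<close>

definition tensor_char :: "('i \<Rightarrow> int) \<Rightarrow> real \<Rightarrow> ('i \<Rightarrow> int) \<Rightarrow> real" where
  "tensor_char x t = restrict (\<lambda>g. tmul t (pairing g x)) (carrier H_grp)"

lemma tensor_char_apply: "g \<in> carrier H_grp \<Longrightarrow> tensor_char x t g = tmul t (pairing g x)"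
  by (simp add: tensor_char_def)

lemma tensor_char_in_Hhat: "tensor_char (x :: 'i \<Rightarrow> int) t \<in> carrier Hhat_grp"
  unfolding tensor_char_def
proof (rule Hhat_restrict_in)
  show "(\<lambda>g. tmul t (pairing g x)) \<in> hom H_grp T_grp"
    by (rule homI) (simp_all add: pairing_add_left tmul_add_int)
  show "continuous_map H_top T_top (\<lambda>g. tmul t (pairing g x))"
    by (rule continuous_map_H_pairing[where F = "tmul t"]) simp_all
qed

lemma tensor_char_hom_T: "tensor_char (x :: 'i \<Rightarrow> int) \<in> hom T_grp Hhat_grp"
proof (rule homI)
  fix s t :: real
  show "tensor_char x (s \<otimes>\<^bsub>T_grp\<^esub> t) = tensor_char x s \<otimes>\<^bsub>Hhat_grp\<^esub> tensor_char x t"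
    by (rule ext) (simp add: tensor_char_def tmul_frac_add)
qed (rule tensor_char_in_Hhat)

lemma continuous_map_tensor_char_T: "continuous_map T_top Hhat_top (tensor_char (x :: 'i \<Rightarrow> int))"
proof (rule continuous_map_into_Hhat)
  fix g :: "'i \<Rightarrow> int" assume "g \<in> carrier H_grp"
  then show "continuous_map T_top T_top (\<lambda>t. tensor_char x t g)"
    using continuous_map_tmul[of "pairing g x"] by (simp add: tensor_char_apply)
qed (simp add: tensor_char_in_Hhat)

lemma tensor_char_hom_ZI: "(\<lambda>x :: 'i \<Rightarrow> int. tensor_char x t) \<in> hom ZI_grp Hhat_grp"
proof (rule homI)
  fix x y :: "'i \<Rightarrow> int"
  show "tensor_char (x \<otimes>\<^bsub>ZI_grp\<^esub> y) t = tensor_char x t \<otimes>\<^bsub>Hhat_grp\<^esub> tensor_char y t"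
    by (rule ext) (simp add: tensor_char_def pairing_add_right tmul_add_int)
qed (rule tensor_char_in_Hhat)

lemma continuous_map_tensor_char_ZI: "continuous_map ZI_top Hhat_top (\<lambda>x :: 'i \<Rightarrow> int. tensor_char x t)"
proof (rule continuous_map_into_Hhat)
  fix g :: "'i \<Rightarrow> int" assume g: "g \<in> carrier H_grp"
  have "tensor_char x t g = tensor_char y t g" if "\<forall>i\<in>{i. g i \<noteq> 0}. x i = y i" for x y
    using g that by (simp add: tensor_char_apply pairing_def)
  then show "continuous_map ZI_top T_top (\<lambda>x. tensor_char x t g)"
    using g by (intro continuous_map_ZI_finite_dependence[of "{i. g i \<noteq> 0}"])
      (auto simp: tensor_char_apply)
qed (simp add: tensor_char_in_Hhat)

lemma cont_bihom_tensor_char: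
  "cont_bihom ZI_grp ZI_top T_grp T_top Hhat_grp Hhat_top (tensor_char :: ('i \<Rightarrow> int) \<Rightarrow> _)"
  unfolding cont_bihom_def
proof (intro conjI ballI allI impI tensor_char_hom_T continuous_map_tensor_char_T
    tensor_char_hom_ZI continuous_map_tensor_char_ZI)
  fix U :: "(('i \<Rightarrow> int) \<Rightarrow> real) set" assume "openin Hhat_top U \<and> \<one>\<^bsub>Hhat_grp\<^esub> \<in> U"
  then obtain F e where F: "finite F" "F \<subseteq> carrier H_grp" and e: "e > 0"
    and basic: "{a \<in> carrier Hhat_grp. \<forall>g\<in>F. tnorm (a g) < e} \<subseteq> U"
    using Hhat_nhd_one_contains_basic[of U] by blast
  define S where "S = (\<Union>g\<in>F. {i. g i \<noteq> 0})"
  have "finite S" using F by (auto simp: S_def)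
  have "tensor_char x t \<in> U" if "x \<in> cyl S (\<lambda>i. 0)" for x t
  proof -
    have "pairing g x = 0" if "g \<in> F" for g
      using \<open>x \<in> cyl S _\<close> that by (intro pairing_eq_0) (auto simp: cyl_def S_def)
    then have "tensor_char x t g = 0" if "g \<in> F" for g
      using F(2) that \<open>\<And>g. g \<in> F \<Longrightarrow> pairing g x = 0\<close> tensor_char_apply[of g x t]
      by (auto simp: tmul_def)
    then have "tensor_char x t \<in> {a \<in> carrier Hhat_grp. \<forall>g\<in>F. tnorm (a g) < e}"
      using e tensor_char_in_Hhat by (simp add: tnorm_def)
    then show ?thesis using basic by blast
  qed
  then show "\<exists>V W. openin ZI_top V \<and> \<one>\<^bsub>ZI_grp\<^esub> \<in> V \<and> openin T_top W \<and> \<one>\<^bsub>T_grp\<^esub> \<in> W \<and>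
      (\<forall>x\<in>V. \<forall>y\<in>W. tensor_char x y \<in> U)"
    using openin_ZI_cyl[OF \<open>finite S\<close>] openin_topspace[of T_top]
    by (intro exI[of _ "cyl S (\<lambda>i. 0)"] exI[of _ "{0..<1}"]) (auto simp: cyl_def)
qed

lemma ZI_hom_eqI:
  assumes \<zeta>: "\<zeta> \<in> hom ZI_grp M" "\<zeta>' \<in> hom ZI_grp M" and M: "group M" and S: "finite S"
    and units: "\<And>i. i \<in> S \<Longrightarrow> \<zeta> (unit_vec i) = \<zeta>' (unit_vec i)"
    and cyl: "\<And>x. x \<in> cyl S (\<lambda>i. 0) \<Longrightarrow> \<zeta> x = \<zeta>' x"
  shows "\<zeta> x = \<zeta>' x"
proof -
  define restr where "restr A = (\<lambda>i. if i \<in> A then x i else 0)" for A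
  have "\<zeta> (restr A) = \<zeta>' (restr A)" if "A \<subseteq> S" for A
    using finite_subset[OF that S] that
  proof (induction A rule: finite_induct)
    case empty
    then show ?case using cyl by (simp add: restr_def cyl_def)
  next
    case (insert a A)
    have "restr (insert a A) = restr A \<otimes>\<^bsub>ZI_grp\<^esub> (unit_vec a [^]\<^bsub>ZI_grp\<^esub> x a)"
      using insert.hyps(2) by (auto simp: restr_def unit_vec_def ZI_int_pow)
    moreover have "\<zeta> (unit_vec a [^]\<^bsub>ZI_grp\<^esub> x a) = \<zeta>' (unit_vec a [^]\<^bsub>ZI_grp\<^esub> x a)"
      using hom_int_pow[OF \<zeta>(1) _ group_ZI M] hom_int_pow[OF \<zeta>(2) _ group_ZI M] units[of a] insert.prems
      by simp
    ultimately show ?case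
      using insert.IH insert.prems \<zeta> by (simp add: hom_mult del: ZI_grp_simps(2))
  qed
  note restr_S = this[OF order_refl]
  define x' where "x' = (\<lambda>i. if i \<in> S then 0 else x i)"
  have "x = restr S \<otimes>\<^bsub>ZI_grp\<^esub> x'" by (auto simp: restr_def x'_def)
  moreover have "\<zeta> x' = \<zeta>' x'" by (rule cyl) (simp add: x'_def cyl_def)
  ultimately show ?thesis
    using arg_cong[of x _ \<zeta>] arg_cong[of x _ \<zeta>'] hom_mult[OF \<zeta>(1)] hom_mult[OF \<zeta>(2)] restr_S
    by (metis UNIV_I ZI_grp_simps(1))
qed

lemma cont_bihom_ZI_T_vanishes_on_cyl:
  assumes \<kappa>: "cont_bihom ZI_grp ZI_top T_grp T_top T_grp T_top \<kappa>"
  obtains S where "finite S" "\<And>x t. x \<in> cyl S (\<lambda>i. 0) \<Longrightarrow> t \<in> {0..<1} \<Longrightarrow> \<kappa> x t = 0"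
proof -
  have hom_ZI: "(\<lambda>x. \<kappa> x t) \<in> hom ZI_grp T_grp" if "t \<in> {0..<1}" for t
    using \<kappa> that by (simp add: cont_bihom_def)
  have hom_T: "\<kappa> x \<in> hom T_grp T_grp" for x
    using \<kappa> by (simp add: cont_bihom_def)
  have "\<forall>U. openin T_top U \<and> 0 \<in> U \<longrightarrow> (\<exists>V W. openin ZI_top V \<and> (\<lambda>i. 0) \<in> V \<and>
      openin T_top W \<and> 0 \<in> W \<and> (\<forall>x\<in>V. \<forall>t\<in>W. \<kappa> x t \<in> U))"
    using \<kappa> unfolding cont_bihom_def by simp
  moreover have "openin T_top (tball 0 (1/4)) \<and> 0 \<in> tball 0 (1/4)"
    by (simp add: openin_tball centre_in_tball)
  ultimately obtain V W where VW: "openin ZI_top V" "(\<lambda>i. 0) \<in> V" "openin T_top W" "0 \<in> W"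
    "\<And>x t. x \<in> V \<Longrightarrow> t \<in> W \<Longrightarrow> \<kappa> x t \<in> tball 0 (1/4)"
    by meson
  obtain S where S: "finite S" "cyl S (\<lambda>i. 0) \<subseteq> V"
    using ZI_nhd_contains_cyl[OF VW(1,2)] by blast
  obtain \<delta> where \<delta>: "\<delta> > 0" "\<forall>t\<in>{0..<1}. tnorm (t - 0) < \<delta> \<longrightarrow> t \<in> W"
    using VW(3,4) unfolding openin_T_iff by blast
  \<comment> \<open>for small \<open>t\<close> the subgroup \<open>cyl S 0\<close> is mapped into the \<open>1/4\<close>-ball, hence to 0\<close>
  have small_t: "\<kappa> x t = 0" if x: "x \<in> cyl S (\<lambda>i. 0)" and t: "t \<in> {0..<1}" "tnorm t < \<delta>" for x t
  proof (rule hom_T_eq_0_if_powers_small[OF hom_ZI[OF t(1)] group_ZI])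
    fix k :: nat
    have "x [^]\<^bsub>ZI_grp\<^esub> int k \<in> cyl S (\<lambda>i. 0)" using x by (simp add: ZI_int_pow cyl_def)
    then have "\<kappa> (x [^]\<^bsub>ZI_grp\<^esub> k) t \<in> tball 0 (1/4)"
      using VW(5) S(2) \<delta>(2) t by (auto simp: int_pow_int)
    then show "tnorm (\<kappa> (x [^]\<^bsub>ZI_grp\<^esub> k) t) \<le> 1/4" by (simp add: tball_def)
  qed simp
  have "\<kappa> x t = 0" if x: "x \<in> cyl S (\<lambda>i. 0)" and t: "t \<in> {0..<1}" for x t
  proof -
    obtain M :: nat where M: "1 / \<delta> < real M" using reals_Archimedean2 by blast
    moreover have "1 / \<delta> > 0" using \<delta>(1) by simp
    ultimately have M0: "real M > 0" by linarith
    define v where "v = t / real M"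
    have v: "v \<in> {0..<1}" "v < \<delta>"
      using t M M0 \<delta>(1) by (auto simp: v_def field_simps)
    have "\<kappa> x t = \<kappa> x (frac (real M * v))" using t M0 by (simp add: v_def)
    also have "\<dots> = frac (real M * \<kappa> x v)" by (rule T_endo_frac_mult[OF hom_T v(1)])
    also have "\<kappa> x v = 0"
      using small_t[OF x v(1)] tnorm_le_abs[of v] v by simp
    finally show ?thesis by simp
  qed
  then show ?thesis using that S(1) by blast
qed

theorem cont_bihom_ZI_T_eq_pairing:
  assumes \<kappa>: "cont_bihom ZI_grp ZI_top T_grp T_top T_grp T_top \<kappa>"
  obtains g where "g \<in> carrier H_grp" "\<And>x t. t \<in> {0..<1} \<Longrightarrow> \<kappa> x t = tmul t (pairing g x)"
proof -
  obtain S where S: "finite S" and vanish: "\<And>x t. x \<in> cyl S (\<lambda>i. 0) \<Longrightarrow> t \<in> {0..<1} \<Longrightarrow> \<kappa> x t = 0"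
    using cont_bihom_ZI_T_vanishes_on_cyl[OF \<kappa>] by blast
  have "\<exists>c::int. \<forall>t\<in>{0..<1}. \<kappa> (unit_vec i) t = frac (of_int c * t)" for i
    using \<kappa> T_endo_eq_mult[of "\<kappa> (unit_vec i)"] unfolding cont_bihom_def by (metis UNIV_I ZI_grp_simps(1))
  then obtain C where C: "\<And>i t. t \<in> {0..<1} \<Longrightarrow> \<kappa> (unit_vec i) t = frac (of_int (C i) * t)"
    by metis
  define g where "g i = (if i \<in> S then C i else 0)" for i
  have "{i. g i \<noteq> 0} \<subseteq> S" by (auto simp: g_def)
  then have g: "g \<in> carrier H_grp" using finite_subset[OF _ S] by simp
  have "\<kappa> x t = tmul t (pairing g x)" if t: "t \<in> {0..<1}" for x t
  proof (rule ZI_hom_eqI[where \<zeta> = "\<lambda>x. \<kappa> x t" and \<zeta>' = "\<lambda>x. tmul t (pairing g x)", OF _ _ group_T S])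
    show "(\<lambda>x. \<kappa> x t) \<in> hom ZI_grp T_grp" using \<kappa> t by (simp add: cont_bihom_def)
    show "(\<lambda>x. tmul t (pairing g x)) \<in> hom ZI_grp T_grp"
      by (rule homI) (simp_all add: pairing_add_right tmul_add_int)
    show "\<kappa> (unit_vec i) t = tmul t (pairing g (unit_vec i))" if "i \<in> S" for i
      using C[OF t] g that by (simp add: pairing_unit_vec tmul_def g_def)
    show "\<kappa> y t = tmul t (pairing g y)" if "y \<in> cyl S (\<lambda>i. 0)" for y
    proof -
      have "pairing g y = 0" using that by (intro pairing_eq_0) (auto simp: g_def cyl_def split: if_splits)
      then show ?thesis using vanish[OF that t] by (simp add: tmul_def)
    qed
  qed
  then show ?thesis using that g by blast
qed

lemma cont_char_Q_tensor_eq_eval: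
  fixes \<beta> :: "('i \<Rightarrow> int) \<Rightarrow> real \<Rightarrow> 'l" and f :: "(('i \<Rightarrow> int) \<Rightarrow> real) \<Rightarrow> 'm"
  assumes tensor: "is_Q_tensor ZI_grp ZI_top T_grp T_top L \<tau>L \<beta> TYPE('m)" and f: "inj f"
    and \<theta>: "\<theta> \<in> hom L Hhat_grp" "continuous_map \<tau>L Hhat_top \<theta>"
      "\<And>x t. x \<in> carrier ZI_grp \<Longrightarrow> t \<in> carrier T_grp \<Longrightarrow> \<theta> (\<beta> x t) = tensor_char x t"
    and ch: "ch \<in> cont_chars L \<tau>L"
  obtains g where "g \<in> carrier H_grp" "\<And>z. z \<in> carrier L \<Longrightarrow> ch z = \<theta> z g"
proof -
  have L: "in_Q L \<tau>L" and \<beta>: "cont_bihom ZI_grp ZI_top T_grp T_top L \<tau>L \<beta>"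
    using tensor by (simp_all add: is_Q_tensor_def)
  have ch': "ch \<in> hom L T_grp" "continuous_map \<tau>L T_top ch"
    using ch by (simp_all add: cont_chars_def)
  obtain g where g: "g \<in> carrier H_grp" and ch\<beta>: "\<And>x t. t \<in> {0..<1} \<Longrightarrow> ch (\<beta> x t) = tmul t (pairing g x)"
    using cont_bihom_ZI_T_eq_pairing[OF cont_bihom_compose[OF \<beta> ch' _ group_T]] in_Q_D[OF L] by blast
  \<comment> \<open>embed \<open>\<bbbT>\<close> into the dual to compare \<open>ch\<close> with evaluation at \<open>g\<close> by uniqueness\<close>
  define ev where "ev = (\<lambda>z. \<theta> z g)"
  define j where "j = tensor_char (unit_vec undefined :: 'i \<Rightarrow> int)"
  have j: "j \<in> hom T_grp Hhat_grp" "continuous_map T_top Hhat_top j"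
    "\<And>t. t \<in> {0..<1} \<Longrightarrow> j t (unit_vec undefined) = t"
    using tensor_char_hom_T continuous_map_tensor_char_T
    by (simp_all add: j_def tensor_char_apply[OF unit_vec_in_H] pairing_unit_vec[OF unit_vec_in_H]
        tmul_one)
  have ev: "ev \<in> hom L T_grp" "continuous_map \<tau>L T_top ev"
    using hom_compose[OF \<theta>(1) Hhat_eval_hom[OF g]] continuous_map_compose[OF \<theta>(2) continuous_map_Hhat_eval[OF g]]
    by (simp_all add: ev_def o_def)
  have "(j \<circ> ch) z = (j \<circ> ev) z" if "z \<in> carrier L" for z
  proof (rule Q_tensor_hom_unique[OF tensor f in_Q_Hhat _ _ _ _ _ that])
    show "j \<circ> ch \<in> hom L Hhat_grp" "j \<circ> ev \<in> hom L Hhat_grp"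
      using hom_compose[OF ch'(1) j(1)] hom_compose[OF ev(1) j(1)] .
    show "continuous_map \<tau>L Hhat_top (j \<circ> ch)" "continuous_map \<tau>L Hhat_top (j \<circ> ev)"
      using continuous_map_compose[OF ch'(2) j(2)] continuous_map_compose[OF ev(2) j(2)] .
    show "(j \<circ> ch) (\<beta> x t) = (j \<circ> ev) (\<beta> x t)" if "x \<in> carrier ZI_grp" "t \<in> carrier T_grp" for x t
      using that g by (simp add: ch\<beta> ev_def \<theta>(3) tensor_char_apply)
  qed
  then have "ch z = ev z" if "z \<in> carrier L" for z
    using j(3) hom_T_range[OF ch'(1) that] hom_T_range[OF ev(1) that] that by (metis comp_apply)
  then show ?thesis using that g by (simp add: ev_def)
qed

theorem proposition4p4:
  fixes L :: "'l monoid" and \<tau>L :: "'l topology"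
    and \<beta> :: "('i \<Rightarrow> int) \<Rightarrow> real \<Rightarrow> 'l"
  assumes nonmeas: "\<not> ulam_measurable (UNIV :: 'i set)"
    and tensor: "is_Q_tensor ZI_grp ZI_top T_grp T_top L \<tau>L \<beta> TYPE('m)"
    and universe_large: "\<exists>f :: (('i \<Rightarrow> int) \<Rightarrow> real) \<Rightarrow> 'm. inj f"
  shows "\<exists>\<theta>. \<theta> \<in> hom L Hhat_grp \<and> inj_on \<theta> (carrier L) \<and>
           (\<forall>x t g. t \<in> carrier T_grp \<and> g \<in> carrier H_grp \<longrightarrow>
              \<theta> (\<beta> x t) g = tmul t (pairing g x))"
proof -
  obtain f :: "(('i \<Rightarrow> int) \<Rightarrow> real) \<Rightarrow> 'm" where f: "inj f" using universe_large by blast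
  obtain \<theta> where \<theta>: "\<theta> \<in> hom L Hhat_grp" "continuous_map \<tau>L Hhat_top \<theta>"
      "\<And>x t. x \<in> carrier ZI_grp \<Longrightarrow> t \<in> carrier T_grp \<Longrightarrow> \<theta> (\<beta> x t) = tensor_char x t"
    using Q_tensor_universal[OF tensor f in_Q_Hhat cont_bihom_tensor_char] by metis
  have "inj_on \<theta> (carrier L)"
  proof (rule inj_onI)
    fix z1 z2 assume z: "z1 \<in> carrier L" "z2 \<in> carrier L" and "\<theta> z1 = \<theta> z2"
    have "ch z1 = ch z2" if "ch \<in> cont_chars L \<tau>L" for ch
      using cont_char_Q_tensor_eq_eval[OF tensor f \<theta> that] z \<open>\<theta> z1 = \<theta> z2\<close> by metis
    then show "z1 = z2"
      using in_Q_cont_chars_separate[of L \<tau>L] tensor z by (simp add: is_Q_tensor_def)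
  qed
  with \<theta> show ?thesis by (auto simp: tensor_char_apply)
qed

end
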